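(* Let $Z\subset\mathbb{S}_1$ be a finite nonempty set of points. Then the following are equivalent: (i) there exists a positive integer $m$ such that $\alpha(mZ)=\alpha((m+1)Z)=\alpha((m+2)Z)=\alpha((m+3)Z)$; (ii) either $Z=\{Q\}$ with $Q\in E_1$, or $Z=\{Q_1,Q_2\}\subset E_1$ with $Q_1\neq Q_2$.
   Context: Let $P_1\in\mathbb{P}^2(\mathbb{C})$ be a point and $f\colon\mathbb{S}_1\to\mathbb{P}^2$ the blow-up of $\mathbb{P}^2$ at $P_1$, with exceptional curve $E_1=f^{-1}(P_1)$; let $H$ be the pullback of the class of a line. Let $\mathbb{L}_1=3H-E_1=-K_{\mathbb{S}_1}$. For a finite set $Z\subset\mathbb{S}_1$ with ideal sheaf $\mathcal{I}_Z$ and a positive integer $m$, the initial degree is $\alpha(mZ)=\min\{d\ge 0:\ H^0(\mathbb{S}_1,d\mathbb{L}_1\otimes\mathcal{I}_Z^{(m)})\neq 0\}$, i.e. the least $d$ such that some effective divisor $D\in|d\mathbb{L}_1|$ has multiplicity at least $m$ at every point of $Z$. *)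

theory Defs
  imports Complex_Main
begin

text \<open>
  Points of the blow-up S_1 = (P^2 - {P1}) disjoint-union E_1, where E_1 is the
  projectivised tangent space at P1 (directions [s:t] in the affine chart z = 1).
  Projective points are represented by normalised representatives
  (first nonzero coordinate equal to 1).
\<close>

datatype s1pt = Off "complex \<times> complex \<times> complex" | Exc "complex \<times> complex"

definition norm3 :: "complex \<times> complex \<times> complex \<Rightarrow> bool" where
  "norm3 p = (case p of (a, b, c) \<Rightarrow>
      a = 1 \<or> (a = 0 \<and> b = 1) \<or> (a = 0 \<and> b = 0 \<and> c = 1))"

definition norm2 :: "complex \<times> complex \<Rightarrow> bool" where
  "norm2 l = (case l of (s, t) \<Rightarrow> s = 1 \<or> (s = 0 \<and> t = 1))"

definition P1 :: "complex \<times> complex \<times> complex" where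
  "P1 = (0, 0, 1)"

definition S1 :: "s1pt set" where
  "S1 = {Off p | p. norm3 p \<and> p \<noteq> P1} \<union> {Exc l | l. norm2 l}"

definition E1 :: "s1pt set" where
  "E1 = {Exc l | l. norm2 l}"

text \<open>
  A nonzero section of d L_1 = d(3H - E_1) is a nonzero form
  F = sum_{i+j <= 3d} c i j x^i y^j z^(3d-i-j) of degree 3d having multiplicity
  at least d at P1, i.e. c i j = 0 whenever i + j < d.  The corresponding
  divisor is D = f^* V(F) - d E_1.
\<close>
definition sect :: "nat \<Rightarrow> (nat \<Rightarrow> nat \<Rightarrow> complex) \<Rightarrow> bool" where
  "sect d c \<longleftrightarrow> (\<forall>i j. 3 * d < i + j \<longrightarrow> c i j = 0)
               \<and> (\<forall>i j. i + j < d \<longrightarrow> c i j = 0)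
               \<and> (\<exists>i j. c i j \<noteq> 0)"

text \<open>Taylor coefficient of order (a,b,e) of the form F at the point p of P^2
  (equal to the partial derivative d^(a+b+e) F / dx^a dy^b dz^e at p, divided by a! b! e!).\<close>
definition taylor3 :: "nat \<Rightarrow> (nat \<Rightarrow> nat \<Rightarrow> complex) \<Rightarrow> complex \<times> complex \<times> complex
                       \<Rightarrow> nat \<Rightarrow> nat \<Rightarrow> nat \<Rightarrow> complex" where
  "taylor3 d c p a b e = (case p of (p0, p1, p2) \<Rightarrow>
     (\<Sum>i\<le>3*d. \<Sum>j\<le>3*d - i. c i j * of_nat (i choose a) * of_nat (j choose b)
        * of_nat ((3*d - i - j) choose e)
        * p0 ^ (i - a) * p1 ^ (j - b) * p2 ^ (3*d - i - j - e)))"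

text \<open>Taylor coefficient of order (a,b) of the local equation of D at the point
  of E_1 with direction [s:t].  If s \<noteq> 0 we use the chart x = u, y = u v
  (local equation G(u,v) = F(u,uv,1)/u^d, point (0, t/s)); otherwise the chart
  x = w y, y = y (local equation G(w,y) = F(wy,y,1)/y^d, point (s/t, 0)).\<close>
definition taylorE :: "nat \<Rightarrow> (nat \<Rightarrow> nat \<Rightarrow> complex) \<Rightarrow> complex \<times> complex
                       \<Rightarrow> nat \<Rightarrow> nat \<Rightarrow> complex" where
  "taylorE d c l a b = (case l of (s, t) \<Rightarrow>
     (if s \<noteq> 0 then
        (\<Sum>j\<le>d + a. c (d + a - j) j * of_nat (j choose b) * (t / s) ^ (j - b))
      else
        (\<Sum>i\<le>d + b. c i (d + b - i) * of_nat (i choose a) * (s / t) ^ (i - a))))"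

definition mult_ge :: "nat \<Rightarrow> (nat \<Rightarrow> nat \<Rightarrow> complex) \<Rightarrow> s1pt \<Rightarrow> nat \<Rightarrow> bool" where
  "mult_ge d c Q m = (case Q of
      Off p \<Rightarrow> (\<forall>a b e. a + b + e < m \<longrightarrow> taylor3 d c p a b e = 0)
    | Exc l \<Rightarrow> (\<forall>a b. a + b < m \<longrightarrow> taylorE d c l a b = 0))"

definition alpha :: "nat \<Rightarrow> s1pt set \<Rightarrow> nat" where
  "alpha m Z = (LEAST d. \<exists>c. sect d c \<and> (\<forall>Q\<in>Z. mult_ge d c Q m))"

end

theory Submission
  imports Defs "HOL-Library.Multiset"
begin

(*
  Unless
  F is a form in x and y alone, three suitably chosen partial derivatives of F give a nonzero
  section of (d - 1) L_1 whose multiplicity at every point of S_1 is at most 3 lower.  A form F(x, y)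
  is a product of 3d lines through P_1: its multiplicity at a point of S_1 is the multiplicity of the
  direction of that point as a root of F, plus 2d on E_1.  For such F the same descent is obtained by
  three derivatives when m <= 2(d - 1), and otherwise by dividing F by the cube of the line through
  a point of Z off E_1, or by the three lines of three distinct points of Z on E_1.  Hence
  alpha(mZ) < alpha((m+3)Z) unless Z is one point or two points of E_1.  In these cases the forms
  l^3 and l1^3 l2^3, together with the fact that the root multiplicities of a nonzero binary form
  add up to at most its degree, give alpha(kZ) = 1 for 1 <= k <= 5 and alpha(kZ) = 2 for
  4 <= k <= 7.
*)

section \<open>Ternary forms and their Taylor coefficients\<close>

definition form_taylor :: "nat \<Rightarrow> (nat \<Rightarrow> nat \<Rightarrow> complex) \<Rightarrow> complex \<times> complex \<times> complex
                            \<Rightarrow> nat \<Rightarrow> nat \<Rightarrow> nat \<Rightarrow> complex" where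
  "form_taylor N c p a b e = (case p of (p0, p1, p2) \<Rightarrow>
     (\<Sum>i\<le>N. \<Sum>j\<le>N - i. c i j * of_nat (i choose a) * of_nat (j choose b)
        * of_nat ((N - i - j) choose e)
        * p0 ^ (i - a) * p1 ^ (j - b) * p2 ^ (N - i - j - e)))"

lemma taylor3_eq_form_taylor: "taylor3 d c = form_taylor (3 * d) c"
  by (auto simp: fun_eq_iff taylor3_def form_taylor_def)

definition is_form :: "nat \<Rightarrow> (nat \<Rightarrow> nat \<Rightarrow> complex) \<Rightarrow> bool" where
  "is_form N c \<longleftrightarrow> (\<forall>i j. N < i + j \<longrightarrow> c i j = 0)"

definition mult_P1_ge :: "nat \<Rightarrow> (nat \<Rightarrow> nat \<Rightarrow> complex) \<Rightarrow> bool" where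
  "mult_P1_ge k c \<longleftrightarrow> (\<forall>i j. i + j < k \<longrightarrow> c i j = 0)"

lemma sect_iff: "sect d c \<longleftrightarrow> is_form (3 * d) c \<and> mult_P1_ge d c \<and> (\<exists>i j. c i j \<noteq> 0)"
  by (simp add: sect_def is_form_def mult_P1_ge_def)

lemma mult_P1_ge_mono: "mult_P1_ge k c \<Longrightarrow> k' \<le> k \<Longrightarrow> mult_P1_ge k' c"
  by (auto simp: mult_P1_ge_def)

definition deriv_x :: "(nat \<Rightarrow> nat \<Rightarrow> complex) \<Rightarrow> nat \<Rightarrow> nat \<Rightarrow> complex" where
  "deriv_x c i j = of_nat (Suc i) * c (Suc i) j"

definition deriv_y :: "(nat \<Rightarrow> nat \<Rightarrow> complex) \<Rightarrow> nat \<Rightarrow> nat \<Rightarrow> complex" where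
  "deriv_y c i j = of_nat (Suc j) * c i (Suc j)"

definition deriv_z :: "nat \<Rightarrow> (nat \<Rightarrow> nat \<Rightarrow> complex) \<Rightarrow> nat \<Rightarrow> nat \<Rightarrow> complex" where
  "deriv_z N c i j = of_nat (N - i - j) * c i j"

lemma deriv_x_eq_0_iff [simp]: "deriv_x c i j = 0 \<longleftrightarrow> c (Suc i) j = 0"
  by (simp add: deriv_x_def del: of_nat_Suc)

lemma deriv_y_eq_0_iff [simp]: "deriv_y c i j = 0 \<longleftrightarrow> c i (Suc j) = 0"
  by (simp add: deriv_y_def del: of_nat_Suc)

lemma deriv_z_eq_0_iff [simp]: "deriv_z N c i j = 0 \<longleftrightarrow> N \<le> i + j \<or> c i j = 0"
  by (auto simp: deriv_z_def)

lemma is_form_deriv_x: "is_form N c \<Longrightarrow> is_form (N - 1) (deriv_x c)"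
  and is_form_deriv_y: "is_form N c \<Longrightarrow> is_form (N - 1) (deriv_y c)"
  and is_form_deriv_z: "is_form N c \<Longrightarrow> is_form (N - 1) (deriv_z N c)"
  by (auto simp: is_form_def)

lemma mult_P1_ge_deriv_x: "mult_P1_ge k c \<Longrightarrow> mult_P1_ge (k - 1) (deriv_x c)"
  and mult_P1_ge_deriv_y: "mult_P1_ge k c \<Longrightarrow> mult_P1_ge (k - 1) (deriv_y c)"
  and mult_P1_ge_deriv_z: "mult_P1_ge k c \<Longrightarrow> mult_P1_ge k (deriv_z N c)"
  by (auto simp: mult_P1_ge_def)

lemma of_nat_binomial_absorption:
  "of_nat (Suc k) * of_nat (n choose Suc k) = (of_nat n * of_nat ((n - 1) choose k) :: 'a::comm_semiring_1)"
  by (metis binomial_absorption of_nat_mult)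

lemma of_nat_binomial_absorb_comp:
  "of_nat (Suc k) * of_nat (n choose Suc k) = (of_nat (n - k) * of_nat (n choose k) :: 'a::comm_semiring_1)"
  by (metis binomial_absorption binomial_absorb_comp of_nat_mult)

lemma of_nat_Suc_times_binomial:
  "of_nat (Suc n) * of_nat (n choose k) = (of_nat (Suc k) * of_nat (Suc n choose Suc k) :: 'a::comm_semiring_1)"
  by (metis of_nat_binomial_absorption diff_Suc_1)

lemma of_nat_binomial_absorb_comp_power:
  "of_nat (Suc k) * of_nat (n choose Suc k) * (q * q ^ (n - Suc k))
   = of_nat (n - k) * of_nat (n choose k) * (q::complex) ^ (n - k)"
proof (cases "n \<le> k")
  case False
  then have "q * q ^ (n - Suc k) = q ^ (n - k)" by (metis Suc_diff_Suc not_le power_Suc)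
  then show ?thesis by (simp only: of_nat_binomial_absorb_comp)
qed (simp add: binomial_eq_0)

definition form_taylor_term :: "nat \<Rightarrow> (nat \<Rightarrow> nat \<Rightarrow> complex) \<Rightarrow> complex \<Rightarrow> complex \<Rightarrow> complex
                                 \<Rightarrow> nat \<Rightarrow> nat \<Rightarrow> nat \<Rightarrow> nat \<Rightarrow> nat \<Rightarrow> complex" where
  "form_taylor_term N c p0 p1 p2 a b e i j = c i j * of_nat (i choose a) * of_nat (j choose b)
        * of_nat ((N - i - j) choose e) * p0 ^ (i - a) * p1 ^ (j - b) * p2 ^ (N - i - j - e)"

lemma form_taylor_rectangle:
  assumes "is_form N c" "N \<le> K1" "N \<le> K2"
  shows "form_taylor N c (p0, p1, p2) a b e = (\<Sum>i\<le>K1. \<Sum>j\<le>K2. form_taylor_term N c p0 p1 p2 a b e i j)"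
proof -
  have "(\<Sum>j\<le>N - i. form_taylor_term N c p0 p1 p2 a b e i j)
        = (\<Sum>j\<le>K2. form_taylor_term N c p0 p1 p2 a b e i j)" for i
    by (rule sum.mono_neutral_left) (use assms in \<open>auto simp: form_taylor_term_def is_form_def\<close>)
  then have "form_taylor N c (p0, p1, p2) a b e = (\<Sum>i\<le>N. \<Sum>j\<le>K2. form_taylor_term N c p0 p1 p2 a b e i j)"
    by (simp add: form_taylor_def form_taylor_term_def)
  also have "\<dots> = (\<Sum>i\<le>K1. \<Sum>j\<le>K2. form_taylor_term N c p0 p1 p2 a b e i j)"
    by (rule sum.mono_neutral_left)
      (use assms in \<open>auto simp: form_taylor_term_def is_form_def intro!: sum.neutral\<close>)
  finally show ?thesis .
qed

lemma form_taylor_deriv_z: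
  assumes "is_form N c"
  shows "form_taylor (N - 1) (deriv_z N c) p a b e = of_nat (Suc e) * form_taylor N c p a b (Suc e)"
proof -
  obtain p0 p1 p2 where p: "p = (p0, p1, p2)" by (cases p)
  have "form_taylor_term (N - 1) (deriv_z N c) p0 p1 p2 a b e i j
        = of_nat (Suc e) * form_taylor_term N c p0 p1 p2 a b (Suc e) i j" for i j
  proof -
    define W where "W = c i j * of_nat (i choose a) * of_nat (j choose b)
      * p0 ^ (i - a) * p1 ^ (j - b) * p2 ^ (N - i - j - Suc e)"
    have "N - 1 - i - j = N - i - j - 1" "N - 1 - i - j - e = N - i - j - Suc e"
      by simp_all
    then have "form_taylor_term (N - 1) (deriv_z N c) p0 p1 p2 a b e i j
               = (of_nat (N - i - j) * of_nat ((N - i - j - 1) choose e)) * W"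
      unfolding form_taylor_term_def deriv_z_def W_def by (simp only: mult_ac)
    moreover have "form_taylor_term N c p0 p1 p2 a b (Suc e) i j = of_nat ((N - i - j) choose Suc e) * W"
      unfolding form_taylor_term_def W_def by (simp only: mult_ac)
    ultimately show ?thesis
      by (simp only: of_nat_binomial_absorption[symmetric] mult_ac)
  qed
  then show ?thesis
    using form_taylor_rectangle[OF is_form_deriv_z[OF assms], of N N]
      form_taylor_rectangle[OF assms, of N N]
    by (simp add: p sum_distrib_left)
qed

lemma form_taylor_deriv_x:
  assumes "is_form N c"
  shows "form_taylor (N - 1) (deriv_x c) p a b e = of_nat (Suc a) * form_taylor N c p (Suc a) b e"
proof -
  obtain p0 p1 p2 where p: "p = (p0, p1, p2)" by (cases p)
  have "form_taylor N c (p0, p1, p2) (Suc a) b e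
        = (\<Sum>i\<le>Suc N. \<Sum>j\<le>N. form_taylor_term N c p0 p1 p2 (Suc a) b e i j)"
    by (rule form_taylor_rectangle) (use assms in auto)
  also have "\<dots> = (\<Sum>i\<le>N. \<Sum>j\<le>N. form_taylor_term N c p0 p1 p2 (Suc a) b e (Suc i) j)"
    by (subst sum.atMost_Suc_shift) (simp add: form_taylor_term_def)
  finally have shifted: "form_taylor N c (p0, p1, p2) (Suc a) b e = \<dots>" .
  have "form_taylor_term (N - 1) (deriv_x c) p0 p1 p2 a b e i j
        = of_nat (Suc a) * form_taylor_term N c p0 p1 p2 (Suc a) b e (Suc i) j" for i j
  proof -
    define W where "W = c (Suc i) j * of_nat (j choose b) * of_nat ((N - Suc i - j) choose e)
       * p0 ^ (i - a) * p1 ^ (j - b) * p2 ^ (N - Suc i - j - e)"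
    have "N - 1 - i - j = N - Suc i - j" by simp
    then have "form_taylor_term (N - 1) (deriv_x c) p0 p1 p2 a b e i j
               = (of_nat (Suc i) * of_nat (i choose a)) * W"
      unfolding form_taylor_term_def deriv_x_def W_def by (simp only: mult_ac)
    moreover have "form_taylor_term N c p0 p1 p2 (Suc a) b e (Suc i) j = of_nat (Suc i choose Suc a) * W"
      unfolding form_taylor_term_def W_def by (simp only: mult_ac diff_Suc_Suc)
    ultimately show ?thesis
      by (simp only: of_nat_binomial_absorption diff_Suc_1 mult_ac)
  qed
  then show ?thesis
    unfolding p using form_taylor_rectangle[OF is_form_deriv_x[OF assms], of N N]
    by (simp add: shifted sum_distrib_left)
qed

lemma form_taylor_deriv_y:
  assumes "is_form N c"
  shows "form_taylor (N - 1) (deriv_y c) p a b e = of_nat (Suc b) * form_taylor N c p a (Suc b) e"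
proof -
  obtain p0 p1 p2 where p: "p = (p0, p1, p2)" by (cases p)
  have "form_taylor N c (p0, p1, p2) a (Suc b) e
        = (\<Sum>i\<le>N. \<Sum>j\<le>Suc N. form_taylor_term N c p0 p1 p2 a (Suc b) e i j)"
    by (rule form_taylor_rectangle) (use assms in auto)
  also have "\<dots> = (\<Sum>i\<le>N. \<Sum>j\<le>N. form_taylor_term N c p0 p1 p2 a (Suc b) e i (Suc j))"
    by (rule sum.cong[OF refl], subst sum.atMost_Suc_shift) (simp add: form_taylor_term_def)
  finally have shifted: "form_taylor N c (p0, p1, p2) a (Suc b) e = \<dots>" .
  have "form_taylor_term (N - 1) (deriv_y c) p0 p1 p2 a b e i j
        = of_nat (Suc b) * form_taylor_term N c p0 p1 p2 a (Suc b) e i (Suc j)" for i j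
  proof -
    define W where "W = c i (Suc j) * of_nat (i choose a) * of_nat ((N - i - Suc j) choose e)
       * p0 ^ (i - a) * p1 ^ (j - b) * p2 ^ (N - i - Suc j - e)"
    have "N - 1 - i - j = N - i - Suc j" by simp
    then have "form_taylor_term (N - 1) (deriv_y c) p0 p1 p2 a b e i j
               = (of_nat (Suc j) * of_nat (j choose b)) * W"
      unfolding form_taylor_term_def deriv_y_def W_def by (simp only: mult_ac)
    moreover have "form_taylor_term N c p0 p1 p2 a (Suc b) e i (Suc j) = of_nat (Suc j choose Suc b) * W"
      unfolding form_taylor_term_def W_def by (simp only: mult_ac diff_Suc_Suc)
    ultimately show ?thesis
      by (simp only: of_nat_binomial_absorption diff_Suc_1 mult_ac)
  qed
  then show ?thesis
    unfolding p using form_taylor_rectangle[OF is_form_deriv_y[OF assms], of N N]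
    by (simp add: shifted sum_distrib_left)
qed

definition form_mult_ge :: "nat \<Rightarrow> (nat \<Rightarrow> nat \<Rightarrow> complex) \<Rightarrow> complex \<times> complex \<times> complex \<Rightarrow> nat \<Rightarrow> bool" where
  "form_mult_ge N c p M \<longleftrightarrow> (\<forall>a b e. a + b + e < M \<longrightarrow> form_taylor N c p a b e = 0)"

lemma mult_ge_Off: "mult_ge d c (Off p) M \<longleftrightarrow> form_mult_ge (3 * d) c p M"
  by (simp add: mult_ge_def form_mult_ge_def taylor3_eq_form_taylor)

lemma form_mult_ge_deriv_x:
  assumes "is_form N c" "form_mult_ge N c p M"
  shows "form_mult_ge (N - 1) (deriv_x c) p (M - 1)"
  unfolding form_mult_ge_def form_taylor_deriv_x[OF assms(1)]
  using assms(2) by (simp add: form_mult_ge_def less_diff_conv)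

lemma form_mult_ge_deriv_y:
  assumes "is_form N c" "form_mult_ge N c p M"
  shows "form_mult_ge (N - 1) (deriv_y c) p (M - 1)"
  unfolding form_mult_ge_def form_taylor_deriv_y[OF assms(1)]
  using assms(2) by (simp add: form_mult_ge_def less_diff_conv)

lemma form_mult_ge_deriv_z:
  assumes "is_form N c" "form_mult_ge N c p M"
  shows "form_mult_ge (N - 1) (deriv_z N c) p (M - 1)"
  unfolding form_mult_ge_def form_taylor_deriv_z[OF assms(1)]
  using assms(2) by (simp add: form_mult_ge_def less_diff_conv)

section \<open>Multiplicities along the exceptional curve\<close>

lemma norm2E:
  assumes "norm2 l"
  obtains t where "l = (1, t)" | "l = (0, 1)"
  using assms by (cases l) (auto simp: norm2_def)

lemma mult_ge_mono: "mult_ge d c Q M \<Longrightarrow> M' \<le> M \<Longrightarrow> mult_ge d c Q M'"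
  by (auto simp: mult_ge_def split: s1pt.splits)

lemma mult_ge_Exc: "mult_ge d c (Exc l) M \<longleftrightarrow> (\<forall>a b. a + b < M \<longrightarrow> taylorE d c l a b = 0)"
  by (simp add: mult_ge_def)

lemma taylorE_fin:
  "taylorE k c (1, t) a b = (\<Sum>j\<le>k + a. c (k + a - j) j * of_nat (j choose b) * t ^ (j - b))"
  by (simp add: taylorE_def)

lemma taylorE_inf: "taylorE k c (0, 1) a b = (if a \<le> k + b then c a (k + b - a) else 0)"
proof -
  have "taylorE k c (0, 1) a b = (\<Sum>i\<le>k + b. c i (k + b - i) * of_nat (i choose a) * 0 ^ (i - a))"
    by (simp add: taylorE_def)
  also have "\<dots> = (\<Sum>i\<le>k + b. if i = a then c a (k + b - a) else 0)"
    by (rule sum.cong) auto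
  finally show ?thesis by (simp add: sum.delta)
qed

lemma taylorE_fin_deriv_z:
  "taylorE k (deriv_z N c) (1, t) a b = of_nat (N - (k + a)) * taylorE k c (1, t) a b"
  unfolding taylorE_fin sum_distrib_left by (rule sum.cong) (auto simp: deriv_z_def)

lemma taylorE_fin_deriv_y:
  "taylorE k (deriv_y c) (1, t) a b = of_nat (Suc b) * taylorE (Suc k) c (1, t) a (Suc b)"
proof -
  have "taylorE (Suc k) c (1, t) a (Suc b)
        = (\<Sum>j\<le>k + a. c (k + a - j) (Suc j) * of_nat (Suc j choose Suc b) * t ^ (j - b))"
    unfolding taylorE_fin add_Suc by (subst sum.atMost_Suc_shift) simp
  moreover have "taylorE k (deriv_y c) (1, t) a b
      = (\<Sum>j\<le>k + a. (of_nat (Suc j) * of_nat (j choose b)) * (c (k + a - j) (Suc j) * t ^ (j - b)))"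
    by (simp add: taylorE_fin deriv_y_def mult_ac)
  ultimately show ?thesis
    by (simp only: of_nat_Suc_times_binomial sum_distrib_left mult_ac)
qed

lemma of_nat_times_binomial_power:
  "of_nat j * of_nat (j choose b) * (t::complex) ^ (j - b) =
   of_nat b * of_nat (j choose b) * t ^ (j - b) + of_nat (Suc b) * of_nat (j choose Suc b) * t * t ^ (j - Suc b)"
proof (cases "b \<le> j")
  case True
  then have "(of_nat j :: complex) = of_nat b + of_nat (j - b)" by (simp add: of_nat_diff)
  then show ?thesis using of_nat_binomial_absorb_comp_power[of b j t] by (simp add: algebra_simps)
qed (simp add: binomial_eq_0)

lemma taylorE_fin_deriv_x:
  "taylorE k (deriv_x c) (1, t) a b =
     (of_nat (Suc (k + a)) - of_nat b) * taylorE (Suc k) c (1, t) a b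
     - of_nat (Suc b) * t * taylorE (Suc k) c (1, t) a (Suc b)"
proof -
  define n where "n = Suc (k + a)"
  define g where "g j = c (n - j) j" for j
  have level: "taylorE (Suc k) c (1, t) a b' = (\<Sum>j\<le>n. g j * of_nat (j choose b') * t ^ (j - b'))" for b'
    by (simp add: taylorE_fin g_def n_def)
  have "taylorE k (deriv_x c) (1, t) a b
        = (\<Sum>j\<le>k + a. (of_nat n - of_nat j) * g j * of_nat (j choose b) * t ^ (j - b))"
    unfolding taylorE_fin
    by (rule sum.cong) (auto simp: deriv_x_def g_def n_def of_nat_diff Suc_diff_le)
  also have "\<dots> = (\<Sum>j\<le>n. (of_nat n - of_nat j) * g j * of_nat (j choose b) * t ^ (j - b))"
    by (simp add: n_def)
  also have "\<dots> = of_nat n * (\<Sum>j\<le>n. g j * of_nat (j choose b) * t ^ (j - b))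
      - (\<Sum>j\<le>n. g j * (of_nat j * of_nat (j choose b) * t ^ (j - b)))"
    by (simp add: sum_distrib_left algebra_simps sum_subtractf)
  also have "(\<Sum>j\<le>n. g j * (of_nat j * of_nat (j choose b) * t ^ (j - b)))
      = of_nat b * (\<Sum>j\<le>n. g j * of_nat (j choose b) * t ^ (j - b))
        + of_nat (Suc b) * t * (\<Sum>j\<le>n. g j * of_nat (j choose Suc b) * t ^ (j - Suc b))"
    unfolding of_nat_times_binomial_power by (simp add: sum_distrib_left sum.distrib algebra_simps)
  finally show ?thesis unfolding level n_def by (simp add: algebra_simps)
qed

lemma mult_ge_Exc_deriv_z:
  assumes "norm2 l" "mult_ge k c (Exc l) M"
  shows "mult_ge k (deriv_z N c) (Exc l) M"
  using assms(1)
proof (cases rule: norm2E)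
  case (1 t)
  then show ?thesis using assms(2) by (simp add: mult_ge_Exc taylorE_fin_deriv_z)
next
  case 2
  show ?thesis unfolding 2 mult_ge_Exc
  proof (intro allI impI)
    fix a b assume "a + b < M"
    then have "taylorE k c (0, 1) a b = 0" using assms(2) 2 by (simp add: mult_ge_Exc)
    then show "taylorE k (deriv_z N c) (0, 1) a b = 0"
      by (auto simp: taylorE_inf split: if_splits)
  qed
qed

lemma mult_ge_Exc_deriv_y:
  assumes "norm2 l" "mult_ge (Suc k) c (Exc l) M"
  shows "mult_ge k (deriv_y c) (Exc l) (M - 1)"
  using assms(1)
proof (cases rule: norm2E)
  case (1 t)
  then show ?thesis using assms(2) by (simp add: mult_ge_Exc taylorE_fin_deriv_y)
next
  case 2
  show ?thesis unfolding 2 mult_ge_Exc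
  proof (intro allI impI)
    fix a b assume "a + b < M - 1"
    then have "taylorE (Suc k) c (0, 1) a b = 0" using assms(2) 2 by (simp add: mult_ge_Exc)
    then show "taylorE k (deriv_y c) (0, 1) a b = 0"
      by (auto simp: taylorE_inf Suc_diff_le split: if_splits)
  qed
qed

lemma mult_ge_Exc_deriv_x:
  assumes "norm2 l" "mult_ge (Suc k) c (Exc l) M"
  shows "mult_ge k (deriv_x c) (Exc l) (M - 1)"
  using assms(1)
proof (cases rule: norm2E)
  case (1 t)
  then show ?thesis using assms(2) by (simp add: mult_ge_Exc taylorE_fin_deriv_x)
next
  case 2
  show ?thesis unfolding 2 mult_ge_Exc
  proof (intro allI impI)
    fix a b assume "a + b < M - 1"
    then have "taylorE (Suc k) c (0, 1) (Suc a) b = 0" using assms(2) 2 by (simp add: mult_ge_Exc)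
    then show "taylorE k (deriv_x c) (0, 1) a b = 0"
      by (auto simp: taylorE_inf split: if_splits)
  qed
qed

text \<open>Reading a form as a section of \<open>(k + 1) L\<^sub>1\<close> instead of \<open>k L\<^sub>1\<close> subtracts \<open>E\<^sub>1\<close> from
  its divisor; this is reversible when the form has multiplicity \<open>k + 1\<close> at \<open>P\<^sub>1\<close>.\<close>

lemma mult_ge_Exc_Suc_level:
  assumes "norm2 l" "mult_ge k c (Exc l) M"
  shows "mult_ge (Suc k) c (Exc l) (M - 1)"
  using assms(1)
proof (cases rule: norm2E)
  case (1 t)
  have "taylorE (Suc k) c (1, t) a b = taylorE k c (1, t) (Suc a) b" for a b
    by (simp add: taylorE_fin)
  then show ?thesis using assms(2) 1 by (simp add: mult_ge_Exc)
next
  case 2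
  have "taylorE (Suc k) c (0, 1) a b = taylorE k c (0, 1) a (Suc b)" for a b
    by (simp add: taylorE_inf)
  then show ?thesis using assms(2) 2 by (simp add: mult_ge_Exc)
qed

lemma mult_ge_Exc_pred_level:
  assumes "norm2 l" "mult_P1_ge (Suc k) c" "mult_ge (Suc k) c (Exc l) M"
  shows "mult_ge k c (Exc l) (Suc M)"
  using assms(1)
proof (cases rule: norm2E)
  case (1 t)
  show ?thesis unfolding 1 mult_ge_Exc
  proof (intro allI impI)
    fix a b assume ab: "a + b < Suc M"
    show "taylorE k c (1, t) a b = 0"
    proof (cases a)
      case 0
      then show ?thesis using assms(2) by (auto simp: taylorE_fin mult_P1_ge_def intro!: sum.neutral)
    next
      case (Suc a')
      have "taylorE k c (1, t) a b = taylorE (Suc k) c (1, t) a' b" by (simp add: taylorE_fin Suc)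
      then show ?thesis using assms(3) ab Suc 1 by (simp add: mult_ge_Exc)
    qed
  qed
next
  case 2
  show ?thesis unfolding 2 mult_ge_Exc
  proof (intro allI impI)
    fix a b assume ab: "a + b < Suc M"
    show "taylorE k c (0, 1) a b = 0"
    proof (cases b)
      case 0
      then show ?thesis using assms(2) by (auto simp: taylorE_inf mult_P1_ge_def)
    next
      case (Suc b')
      have "taylorE k c (0, 1) a b = taylorE (Suc k) c (0, 1) a b'" by (simp add: taylorE_inf Suc)
      then show ?thesis using assms(3) ab Suc 2 by (simp add: mult_ge_Exc)
    qed
  qed
qed

section \<open>Lowering the degree by differentiation\<close>

lemma S1_cases:
  assumes "Q \<in> S1"
  obtains p where "Q = Off p" "norm3 p" "p \<noteq> P1" | l where "Q = Exc l" "norm2 l"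
  using assms unfolding S1_def by blast

lemma Exc_in_E1 [simp]: "Exc l \<in> E1 \<longleftrightarrow> norm2 l"
  and Off_notin_E1 [simp]: "Off p \<notin> E1"
  and Exc_in_S1 [simp]: "Exc l \<in> S1 \<longleftrightarrow> norm2 l"
  unfolding E1_def S1_def by blast+

definition has_section :: "nat \<Rightarrow> s1pt set \<Rightarrow> nat \<Rightarrow> bool" where
  "has_section M Z d \<longleftrightarrow> (\<exists>c. sect d c \<and> (\<forall>Q\<in>Z. mult_ge d c Q M))"

lemma alpha_has_section: "alpha M Z = (LEAST d. has_section M Z d)"
  by (simp add: alpha_def has_section_def)

definition descends :: "nat \<Rightarrow> (nat \<Rightarrow> nat \<Rightarrow> complex) \<Rightarrow> nat \<Rightarrow> (nat \<Rightarrow> nat \<Rightarrow> complex) \<Rightarrow> bool" where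
  "descends d c m c' \<longleftrightarrow> is_form (3 * d) c' \<and> mult_P1_ge d c' \<and>
     (\<forall>Q\<in>S1. mult_ge (Suc d) c Q (m + 3) \<longrightarrow> mult_ge d c' Q m)"

lemma descendsI:
  assumes "is_form (3 * d) c'" "mult_P1_ge d c'"
    and "\<And>p. form_mult_ge (3 * d + 3) c p (m + 3) \<Longrightarrow> form_mult_ge (3 * d) c' p m"
    and "\<And>l. norm2 l \<Longrightarrow> mult_ge (Suc d) c (Exc l) (m + 3) \<Longrightarrow> mult_ge d c' (Exc l) m"
  shows "descends d c m c'"
  unfolding descends_def
proof (intro conjI ballI impI)
  fix Q assume "Q \<in> S1" "mult_ge (Suc d) c Q (m + 3)"
  then show "mult_ge d c' Q m"
    by (cases rule: S1_cases) (use assms in \<open>auto simp: mult_ge_Off add.commute\<close>)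
qed (use assms in auto)

lemma has_section_if_descends:
  assumes "descends d c m c'" "c' i j \<noteq> 0" "Z \<subseteq> S1" "\<forall>Q\<in>Z. mult_ge (Suc d) c Q (m + 3)"
  shows "has_section m Z d"
  using assms unfolding has_section_def descends_def sect_iff by blast

definition is_xy_deriv :: "((nat \<Rightarrow> nat \<Rightarrow> complex) \<Rightarrow> nat \<Rightarrow> nat \<Rightarrow> complex) \<Rightarrow> bool" where
  "is_xy_deriv D \<longleftrightarrow> D = deriv_x \<or> D = deriv_y"

lemma is_form_xy_deriv: "is_xy_deriv D \<Longrightarrow> is_form N c \<Longrightarrow> is_form (N - 1) (D c)"
  by (metis is_xy_deriv_def is_form_deriv_x is_form_deriv_y)

lemma mult_P1_ge_xy_deriv: "is_xy_deriv D \<Longrightarrow> mult_P1_ge k c \<Longrightarrow> mult_P1_ge (k - 1) (D c)"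
  by (metis is_xy_deriv_def mult_P1_ge_deriv_x mult_P1_ge_deriv_y)

lemma form_mult_ge_xy_deriv:
  "is_xy_deriv D \<Longrightarrow> is_form N c \<Longrightarrow> form_mult_ge N c p M \<Longrightarrow> form_mult_ge (N - 1) (D c) p (M - 1)"
  by (metis is_xy_deriv_def form_mult_ge_deriv_x form_mult_ge_deriv_y)

lemma mult_ge_Exc_xy_deriv:
  "is_xy_deriv D \<Longrightarrow> norm2 l \<Longrightarrow> mult_ge (Suc k) c (Exc l) M \<Longrightarrow> mult_ge k (D c) (Exc l) (M - 1)"
  by (metis is_xy_deriv_def mult_ge_Exc_deriv_x mult_ge_Exc_deriv_y)

lemma exists_xy_deriv_nonzero:
  assumes "c i j \<noteq> 0" "0 < i + j"
  obtains D i' j' where "is_xy_deriv D" "D c i' j' \<noteq> 0" "Suc (i' + j') = i + j"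
proof (cases i)
  case 0
  with assms obtain j' where "j = Suc j'" by (cases j) auto
  with 0 assms show ?thesis by (intro that[of deriv_y 0 j']) (auto simp: is_xy_deriv_def)
next
  case (Suc i')
  with assms show ?thesis by (intro that[of deriv_x i' j]) (auto simp: is_xy_deriv_def)
qed

lemma exists_xy_derivs2_nonzero:
  assumes "c i j \<noteq> 0" "2 \<le> i + j"
  obtains D1 D2 i' j' where "is_xy_deriv D1" "is_xy_deriv D2" "D2 (D1 c) i' j' \<noteq> 0" "i' + j' + 2 = i + j"
proof -
  have "0 < i + j" using assms(2) by linarith
  then obtain D1 i1 j1 where D1: "is_xy_deriv D1" "D1 c i1 j1 \<noteq> 0" "Suc (i1 + j1) = i + j"
    using exists_xy_deriv_nonzero[of c i j] assms(1) by blast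
  moreover have "0 < i1 + j1" using D1(3) assms(2) by linarith
  ultimately obtain D2 i2 j2 where "is_xy_deriv D2" "D2 (D1 c) i2 j2 \<noteq> 0" "Suc (i2 + j2) = i1 + j1"
    using exists_xy_deriv_nonzero[of "D1 c" i1 j1] by blast
  with D1 show ?thesis using that by simp
qed

lemma descends_zzz:
  assumes "is_form (3 * d + 3) c" "mult_P1_ge (Suc d) c"
  shows "descends d c m (deriv_z (3 * d + 1) (deriv_z (3 * d + 2) (deriv_z (3 * d + 3) c)))"
proof -
  let ?c1 = "deriv_z (3 * d + 3) c" let ?c2 = "deriv_z (3 * d + 2) ?c1" let ?c3 = "deriv_z (3 * d + 1) ?c2"
  have f1: "is_form (3 * d + 2) ?c1" using is_form_deriv_z[OF assms(1)] by simp
  have f2: "is_form (3 * d + 1) ?c2" using is_form_deriv_z[OF f1] by simp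
  show ?thesis
  proof (rule descendsI)
    show "is_form (3 * d) ?c3" using is_form_deriv_z[OF f2] by simp
    have "mult_P1_ge (Suc d) ?c3" using assms(2) by (simp add: mult_P1_ge_deriv_z)
    then show "mult_P1_ge d ?c3" by (rule mult_P1_ge_mono) simp
  next
    fix p assume "form_mult_ge (3 * d + 3) c p (m + 3)"
    then have "form_mult_ge (3 * d + 2) ?c1 p (m + 2)" using form_mult_ge_deriv_z[OF assms(1)] by fastforce
    then have "form_mult_ge (3 * d + 1) ?c2 p (m + 1)" using form_mult_ge_deriv_z[OF f1] by fastforce
    then show "form_mult_ge (3 * d) ?c3 p m" using form_mult_ge_deriv_z[OF f2] by fastforce
  next
    fix l assume l: "norm2 l" "mult_ge (Suc d) c (Exc l) (m + 3)"
    then have "mult_ge (Suc d) ?c3 (Exc l) (m + 3)" by (simp add: mult_ge_Exc_deriv_z)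
    then have "mult_ge d ?c3 (Exc l) (Suc (m + 3))"
      using l(1) assms(2) by (intro mult_ge_Exc_pred_level) (auto simp: mult_P1_ge_deriv_z)
    then show "mult_ge d ?c3 (Exc l) m" by (rule mult_ge_mono) simp
  qed
qed

lemma descends_Dzz:
  assumes "is_form (3 * d + 3) c" "mult_P1_ge (Suc d) c" "is_xy_deriv D"
  shows "descends d c m (deriv_z (3 * d + 1) (deriv_z (3 * d + 2) (D c)))"
proof -
  let ?c1 = "D c" let ?c2 = "deriv_z (3 * d + 2) ?c1" let ?c3 = "deriv_z (3 * d + 1) ?c2"
  have f1: "is_form (3 * d + 2) ?c1" using is_form_xy_deriv[OF assms(3,1)] by simp
  have f2: "is_form (3 * d + 1) ?c2" using is_form_deriv_z[OF f1] by simp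
  show ?thesis
  proof (rule descendsI)
    show "is_form (3 * d) ?c3" using is_form_deriv_z[OF f2] by simp
    show "mult_P1_ge d ?c3" using mult_P1_ge_xy_deriv[OF assms(3,2)] by (simp add: mult_P1_ge_deriv_z)
  next
    fix p assume "form_mult_ge (3 * d + 3) c p (m + 3)"
    then have "form_mult_ge (3 * d + 2) ?c1 p (m + 2)" using form_mult_ge_xy_deriv[OF assms(3,1)] by fastforce
    then have "form_mult_ge (3 * d + 1) ?c2 p (m + 1)" using form_mult_ge_deriv_z[OF f1] by fastforce
    then show "form_mult_ge (3 * d) ?c3 p m" using form_mult_ge_deriv_z[OF f2] by fastforce
  next
    fix l assume l: "norm2 l" "mult_ge (Suc d) c (Exc l) (m + 3)"
    then have "mult_ge d ?c1 (Exc l) (m + 2)" using mult_ge_Exc_xy_deriv[OF assms(3)] by fastforce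
    then have "mult_ge d ?c3 (Exc l) (m + 2)" using l(1) by (simp add: mult_ge_Exc_deriv_z)
    then show "mult_ge d ?c3 (Exc l) m" by (rule mult_ge_mono) simp
  qed
qed

lemma descends_DDz:
  assumes "is_form (3 * d + 3) c" "mult_P1_ge (3 * d + 2) c" "is_xy_deriv D1" "is_xy_deriv D2"
  shows "descends d c m (deriv_z (3 * d + 1) (D2 (D1 c)))"
proof -
  let ?c1 = "D1 c" let ?c2 = "D2 ?c1" let ?c3 = "deriv_z (3 * d + 1) ?c2"
  have f1: "is_form (3 * d + 2) ?c1" using is_form_xy_deriv[OF assms(3,1)] by simp
  have f2: "is_form (3 * d + 1) ?c2" using is_form_xy_deriv[OF assms(4) f1] by simp
  show ?thesis
  proof (rule descendsI)
    show "is_form (3 * d) ?c3" using is_form_deriv_z[OF f2] by simp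
    have "mult_P1_ge (Suc (Suc d)) c" using assms(2) by (rule mult_P1_ge_mono) simp
    then have "mult_P1_ge d ?c2"
      using mult_P1_ge_xy_deriv[OF assms(4) mult_P1_ge_xy_deriv[OF assms(3)]] by fastforce
    then show "mult_P1_ge d ?c3" by (rule mult_P1_ge_deriv_z)
  next
    fix p assume "form_mult_ge (3 * d + 3) c p (m + 3)"
    then have "form_mult_ge (3 * d + 2) ?c1 p (m + 2)" using form_mult_ge_xy_deriv[OF assms(3,1)] by fastforce
    then have "form_mult_ge (3 * d + 1) ?c2 p (m + 1)" using form_mult_ge_xy_deriv[OF assms(4) f1] by fastforce
    then show "form_mult_ge (3 * d) ?c3 p m" using form_mult_ge_deriv_z[OF f2] by fastforce
  next
    fix l assume l: "norm2 l" "mult_ge (Suc d) c (Exc l) (m + 3)"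
    then have "mult_ge (Suc (Suc d)) c (Exc l) (m + 2)" using mult_ge_Exc_Suc_level by fastforce
    then have "mult_ge (Suc d) ?c1 (Exc l) (m + 1)" using mult_ge_Exc_xy_deriv[OF assms(3) l(1)] by fastforce
    then have "mult_ge d ?c2 (Exc l) m" using mult_ge_Exc_xy_deriv[OF assms(4) l(1)] by fastforce
    then show "mult_ge d ?c3 (Exc l) m" using l(1) by (simp add: mult_ge_Exc_deriv_z)
  qed
qed

text \<open>A \<open>z\<close>-derivative keeps the multiplicity at \<open>P\<^sub>1\<close> but may vanish, an \<open>x\<close>- or
  \<open>y\<close>-derivative costs one order at \<open>P\<^sub>1\<close>; so we take as many \<open>z\<close>-derivatives as the
  largest \<open>z\<close>-degree occurring in the form allows.\<close>

lemma has_section_descent_nonbinary: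
  assumes "sect (Suc d) c" "\<forall>Q\<in>Z. mult_ge (Suc d) c Q (m + 3)" "Z \<subseteq> S1"
    and "c i j \<noteq> 0" "i + j < 3 * d + 3"
  shows "has_section m Z d"
proof -
  have F: "is_form (3 * d + 3) c" and L: "mult_P1_ge (Suc d) c"
    using assms(1) by (auto simp: sect_iff add.commute)
  have descend: "has_section m Z d" if "descends d c m c'" "c' i' j' \<noteq> 0" for c' i' j'
    using has_section_if_descends[OF that assms(3,2)] .
  obtain i j where ij: "c i j \<noteq> 0" "i + j < 3 * d + 3" and lowest: "mult_P1_ge (i + j) c"
  proof -
    define k where "k = (LEAST k. \<exists>i j. c i j \<noteq> 0 \<and> i + j = k)"
    have "\<exists>i j. c i j \<noteq> 0 \<and> i + j = k"
      unfolding k_def by (rule LeastI[of _ "i + j"]) (use assms(4) in blast)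
    moreover have "mult_P1_ge k c"
      unfolding mult_P1_ge_def k_def using not_less_Least by blast
    moreover have "k \<le> i + j" unfolding k_def by (rule Least_le) (use assms(4) in blast)
    ultimately show ?thesis using that assms(5) by fastforce
  qed
  consider "i + j \<le> 3 * d" | "i + j = 3 * d + 1" | "i + j = 3 * d + 2" using ij(2) by linarith
  then show ?thesis
  proof cases
    case 1
    then have "deriv_z (3 * d + 1) (deriv_z (3 * d + 2) (deriv_z (3 * d + 3) c)) i j \<noteq> 0"
      using ij(1) by simp
    then show ?thesis by (rule descend[OF descends_zzz[OF F L]])
  next
    case 2
    then have "0 < i + j" by simp
    then obtain D i' j' where D: "is_xy_deriv D" "D c i' j' \<noteq> 0" "Suc (i' + j') = i + j"
      using exists_xy_deriv_nonzero[of c i j] ij(1) by blast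
    then have "deriv_z (3 * d + 1) (deriv_z (3 * d + 2) (D c)) i' j' \<noteq> 0" using 2 by simp
    then show ?thesis by (rule descend[OF descends_Dzz[OF F L D(1)]])
  next
    case 3
    then have "2 \<le> i + j" by simp
    then obtain D1 D2 i' j' where D: "is_xy_deriv D1" "is_xy_deriv D2" "D2 (D1 c) i' j' \<noteq> 0"
        "i' + j' + 2 = i + j"
      using exists_xy_derivs2_nonzero[of c i j] ij(1) by blast
    then have "deriv_z (3 * d + 1) (D2 (D1 c)) i' j' \<noteq> 0" using 3 by simp
    moreover have "mult_P1_ge (3 * d + 2) c" using lowest 3 by simp
    ultimately show ?thesis using descend descends_DDz[OF F _ D(1,2)] by blast
  qed
qed

section \<open>Binary forms and their roots\<close>

text \<open>A binary form of degree \<open>N\<close> is given by its coefficients \<open>g j\<close> of \<open>x\<^sup>N\<^sup>-\<^sup>j y\<^sup>j\<close>.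
  A root is a normalised direction: \<open>(1, t)\<close> stands for \<open>y = t x\<close>, where the multiplicity is read
  off from the Taylor coefficients of \<open>g(1, y)\<close> at \<open>t\<close>, and \<open>(0, 1)\<close> for \<open>x = 0\<close>, where it
  is the number of vanishing top coefficients.\<close>

definition bin_form :: "nat \<Rightarrow> (nat \<Rightarrow> complex) \<Rightarrow> bool" where
  "bin_form N g \<longleftrightarrow> (\<forall>j. N < j \<longrightarrow> g j = 0)"

definition bin_taylor :: "(nat \<Rightarrow> complex) \<Rightarrow> nat \<Rightarrow> complex \<Rightarrow> nat \<Rightarrow> complex" where
  "bin_taylor g N t b = (\<Sum>j\<le>N. g j * of_nat (j choose b) * t ^ (j - b))"

definition root_mult_ge :: "(nat \<Rightarrow> complex) \<Rightarrow> nat \<Rightarrow> complex \<times> complex \<Rightarrow> nat \<Rightarrow> bool" where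
  "root_mult_ge g N w r \<longleftrightarrow>
     (if fst w = 0 then \<forall>a<r. a \<le> N \<longrightarrow> g (N - a) = 0 else \<forall>b<r. bin_taylor g N (snd w) b = 0)"

lemma root_mult_ge_fin: "root_mult_ge g N (1, t) r \<longleftrightarrow> (\<forall>b<r. bin_taylor g N t b = 0)"
  by (simp add: root_mult_ge_def)

lemma root_mult_ge_inf: "root_mult_ge g N (0, 1) r \<longleftrightarrow> (\<forall>a<r. a \<le> N \<longrightarrow> g (N - a) = 0)"
  by (simp add: root_mult_ge_def)

lemma root_mult_ge_0 [simp]: "root_mult_ge g N w 0"
  by (simp add: root_mult_ge_def)

lemma root_mult_ge_mono: "root_mult_ge g N w r \<Longrightarrow> r' \<le> r \<Longrightarrow> root_mult_ge g N w r'"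
  by (auto simp: root_mult_ge_def split: if_splits)

lemma bin_taylor_Suc_degree: "bin_form N h \<Longrightarrow> bin_taylor h (Suc N) s b = bin_taylor h N s b"
  by (simp add: bin_taylor_def bin_form_def)

text \<open>Product with the linear form \<open>y - t x\<close>, whose root is the direction \<open>(1, t)\<close>.\<close>

definition mul_linear :: "complex \<Rightarrow> (nat \<Rightarrow> complex) \<Rightarrow> nat \<Rightarrow> complex" where
  "mul_linear t h j = (if j = 0 then 0 else h (j - 1)) - t * h j"

lemma mul_linear_zero [simp]: "mul_linear t (\<lambda>_. 0) = (\<lambda>_. 0)"
  by (simp add: mul_linear_def fun_eq_iff)

lemma bin_form_mul_linear: "bin_form N h \<Longrightarrow> bin_form (Suc N) (mul_linear t h)"
  by (auto simp: bin_form_def mul_linear_def)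

lemma bin_taylor_mul_linear:
  assumes "bin_form N h"
  shows "bin_taylor (mul_linear t h) (Suc N) s b
         = (\<Sum>j\<le>N. h j * of_nat (Suc j choose b) * s ^ (Suc j - b)) - t * bin_taylor h N s b"
proof -
  have "bin_taylor (mul_linear t h) (Suc N) s b
        = (\<Sum>j\<le>Suc N. (if j = 0 then 0 else h (j - 1)) * of_nat (j choose b) * s ^ (j - b))
          - t * bin_taylor h (Suc N) s b"
    by (simp add: bin_taylor_def mul_linear_def algebra_simps sum_subtractf sum_distrib_left)
  also have "(\<Sum>j\<le>Suc N. (if j = 0 then 0 else h (j - 1)) * of_nat (j choose b) * s ^ (j - b))
      = (\<Sum>j\<le>N. h j * of_nat (Suc j choose b) * s ^ (Suc j - b))"
    by (subst sum.atMost_Suc_shift) simp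
  finally show ?thesis using bin_taylor_Suc_degree[OF assms] by simp
qed

lemma bin_taylor_mul_linear_0:
  "bin_form N h \<Longrightarrow> bin_taylor (mul_linear t h) (Suc N) s 0 = (s - t) * bin_taylor h N s 0"
  unfolding bin_taylor_mul_linear by (simp add: bin_taylor_def sum_distrib_left algebra_simps sum_subtractf)

lemma bin_taylor_mul_linear_Suc:
  assumes "bin_form N h"
  shows "bin_taylor (mul_linear t h) (Suc N) s (Suc b) = bin_taylor h N s b + (s - t) * bin_taylor h N s (Suc b)"
proof -
  have shift: "of_nat (j choose Suc b) * s ^ (j - b) = s * (of_nat (j choose Suc b) * s ^ (j - Suc b))" for j
  proof (cases "j \<le> b")
    case False
    then have "s ^ (j - b) = s * s ^ (j - Suc b)" by (metis Suc_diff_Suc not_le power_Suc)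
    then show ?thesis by simp
  qed (simp add: binomial_eq_0)
  have "(\<Sum>j\<le>N. h j * of_nat (Suc j choose Suc b) * s ^ (Suc j - Suc b))
      = (\<Sum>j\<le>N. h j * of_nat (j choose b) * s ^ (j - b) + h j * (of_nat (j choose Suc b) * s ^ (j - b)))"
    by (rule sum.cong) (simp_all add: algebra_simps)
  also have "\<dots> = bin_taylor h N s b + s * bin_taylor h N s (Suc b)"
    unfolding shift by (simp add: bin_taylor_def sum.distrib sum_distrib_left algebra_simps)
  finally show ?thesis unfolding bin_taylor_mul_linear[OF assms] by (simp add: algebra_simps)
qed

lemma mul_linear_nonzero:
  assumes "bin_form N h" "h \<noteq> (\<lambda>_. 0)"
  shows "mul_linear t h \<noteq> (\<lambda>_. 0)"
proof
  assume zero: "mul_linear t h = (\<lambda>_. 0)"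
  have step: "h j = t * h (Suc j)" for j
  proof -
    have "mul_linear t h (Suc j) = 0" using zero by simp
    then show ?thesis by (simp add: mul_linear_def)
  qed
  have vanish: "h j = 0" if "N < j + n" for j n
    using that
  proof (induction n arbitrary: j)
    case 0
    then show ?case using assms(1) by (simp add: bin_form_def)
  next
    case (Suc n)
    then show ?case using step[of j] by simp
  qed
  have "h j = 0" for j using vanish[of j "Suc N"] by simp
  then show False using assms(2) by auto
qed

lemma divide_linear:
  assumes "bin_form (Suc N) g" "bin_taylor g (Suc N) t 0 = 0"
  obtains h where "bin_form N h" "g = mul_linear t h"
proof -
  define h where "h j = (\<Sum>k\<in>{Suc j..Suc N}. g k * t ^ (k - Suc j))" for j
  have split_power: "t ^ (k - m) = t * t ^ (k - Suc m)" if "Suc m \<le> k" for k m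
  proof -
    have "k - m = Suc (k - Suc m)" using that by arith
    then show ?thesis by simp
  qed
  have "g j = mul_linear t h j" for j
  proof (cases j)
    case 0
    have "bin_taylor g (Suc N) t 0 = (\<Sum>k\<in>{0..Suc N}. g k * t ^ k)"
      by (simp add: bin_taylor_def atLeast0AtMost)
    also have "\<dots> = g 0 + (\<Sum>k\<in>{Suc 0..Suc N}. g k * t ^ k)"
      by (subst sum.atLeast_Suc_atMost) auto
    also have "(\<Sum>k\<in>{Suc 0..Suc N}. g k * t ^ k) = t * h 0"
      unfolding h_def sum_distrib_left by (rule sum.cong) (auto simp: split_power[of 0, simplified])
    finally show ?thesis using assms(2) 0 by (simp add: mul_linear_def eq_neg_iff_add_eq_0)
  next
    case (Suc j')
    show ?thesis
    proof (cases "j \<le> Suc N")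
      case True
      have "h j' = g j + (\<Sum>k\<in>{Suc j..Suc N}. g k * t ^ (k - j))"
        unfolding h_def using True Suc by (subst sum.atLeast_Suc_atMost) auto
      moreover have "t * h j = (\<Sum>k\<in>{Suc j..Suc N}. g k * t ^ (k - j))"
        unfolding h_def sum_distrib_left by (rule sum.cong) (auto simp: split_power)
      ultimately show ?thesis using Suc by (simp add: mul_linear_def)
    next
      case False
      then show ?thesis using Suc assms(1) by (auto simp: mul_linear_def h_def bin_form_def)
    qed
  qed
  moreover have "bin_form N h" by (auto simp: bin_form_def h_def)
  ultimately show ?thesis using that by blast
qed

lemma root_mult_ge_mul_linear:
  assumes "bin_form N h" "norm2 w" "root_mult_ge h N w r"
  shows "root_mult_ge (mul_linear t h) (Suc N) w (if w = (1, t) then Suc r else r)"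
  using assms(2)
proof (cases rule: norm2E)
  case (1 s)
  have "bin_taylor (mul_linear t h) (Suc N) s b = 0" if "b < (if s = t then Suc r else r)" for b
    using that assms(3) 1
    by (cases b) (auto simp: root_mult_ge_fin bin_taylor_mul_linear_0[OF assms(1)]
        bin_taylor_mul_linear_Suc[OF assms(1)] split: if_splits)
  then show ?thesis using 1 by (simp add: root_mult_ge_fin)
next
  case 2
  have "mul_linear t h (Suc N - a) = 0" if "a < r" "a \<le> Suc N" for a
  proof (cases a)
    case 0
    then show ?thesis using that assms 2 by (auto simp: mul_linear_def bin_form_def root_mult_ge_inf)
  next
    case (Suc a')
    then have "h (Suc N - a) = 0" "a \<le> N \<Longrightarrow> h (N - a) = 0"
      using that assms(3) 2 by (auto simp: root_mult_ge_inf)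
    then show ?thesis using Suc that by (auto simp: mul_linear_def Suc_diff_le)
  qed
  then show ?thesis using 2 by (simp add: root_mult_ge_inf)
qed

lemma root_mult_ge_Suc_degree:
  assumes "bin_form N h" "norm2 w" "root_mult_ge h N w r"
  shows "root_mult_ge h (Suc N) w (if w = (0, 1) then Suc r else r)"
  using assms(2)
proof (cases rule: norm2E)
  case (1 s)
  then show ?thesis using assms(3) by (simp add: root_mult_ge_fin bin_taylor_Suc_degree[OF assms(1)])
next
  case 2
  have "h (Suc N - a) = 0" if "a < Suc r" "a \<le> Suc N" for a
  proof (cases a)
    case 0
    then show ?thesis using assms(1) by (simp add: bin_form_def)
  next
    case (Suc a')
    then show ?thesis using that assms(3) 2 by (simp add: root_mult_ge_inf)
  qed
  then show ?thesis using 2 by (simp add: root_mult_ge_inf)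
qed

lemma root_mult_ge_div_linear:
  assumes "bin_form N h" "norm2 w" "root_mult_ge (mul_linear t h) (Suc N) w r"
  shows "root_mult_ge h N w (if w = (1, t) then r - 1 else r)"
  using assms(2)
proof (cases rule: norm2E)
  case (1 s)
  have vanish: "\<forall>b<r. bin_taylor (mul_linear t h) (Suc N) s b = 0"
    using assms(3) 1 by (simp add: root_mult_ge_fin)
  show ?thesis
  proof (cases "s = t")
    case True
    have "bin_taylor h N t b = 0" if "b < r - 1" for b
      using vanish that True bin_taylor_mul_linear_Suc[OF assms(1), of t t b] by simp
    then show ?thesis using 1 True by (simp add: root_mult_ge_fin)
  next
    case False
    have "bin_taylor h N s b = 0" if "b < r" for b
      using that
    proof (induction b)
      case 0
      then show ?case using vanish False bin_taylor_mul_linear_0[OF assms(1), of t s] by simp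
    next
      case (Suc b)
      then show ?case using vanish False bin_taylor_mul_linear_Suc[OF assms(1), of t s b] by simp
    qed
    then show ?thesis using 1 False by (simp add: root_mult_ge_fin)
  qed
next
  case 2
  have vanish: "\<forall>a<r. a \<le> Suc N \<longrightarrow> mul_linear t h (Suc N - a) = 0"
    using assms(3) 2 by (simp add: root_mult_ge_inf)
  have "h (N - a) = 0" if "a < r" "a \<le> N" for a
    using that
  proof (induction a)
    case 0
    then show ?case using vanish assms(1) by (auto simp: mul_linear_def bin_form_def)
  next
    case (Suc a)
    then show ?case using vanish[rule_format, of "Suc a"] by (simp add: mul_linear_def Suc_diff_le)
  qed
  then show ?thesis using 2 by (simp add: root_mult_ge_inf)
qed

lemma root_mult_ge_pred_degree:
  assumes "bin_form N h" "norm2 w" "root_mult_ge h (Suc N) w r"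
  shows "root_mult_ge h N w (if w = (0, 1) then r - 1 else r)"
  using assms(2)
proof (cases rule: norm2E)
  case (1 s)
  then show ?thesis using assms(3) by (simp add: root_mult_ge_fin bin_taylor_Suc_degree[OF assms(1)])
next
  case 2
  have "h (N - a) = 0" if "a < r - 1" "a \<le> N" for a
  proof -
    have "Suc a < r" "Suc a \<le> Suc N" using that by auto
    then have "h (Suc N - Suc a) = 0" using assms(3) 2 by (simp only: root_mult_ge_inf)
    then show ?thesis by simp
  qed
  then show ?thesis using 2 by (simp add: root_mult_ge_inf)
qed

lemma mul_root:
  assumes "norm2 w" "bin_form N h" "h \<noteq> (\<lambda>_. 0)"
  obtains g where "bin_form (Suc N) g" "g \<noteq> (\<lambda>_. 0)"
    "\<And>w' r. norm2 w' \<Longrightarrow> root_mult_ge h N w' r \<Longrightarrow> root_mult_ge g (Suc N) w' (if w' = w then Suc r else r)"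
  using assms(1)
proof (cases rule: norm2E)
  case (1 t)
  show ?thesis
    by (rule that[of "mul_linear t h"])
      (use assms 1 in \<open>auto simp: bin_form_mul_linear mul_linear_nonzero root_mult_ge_mul_linear\<close>)
next
  case 2
  have "bin_form (Suc N) h" using assms(2) by (simp add: bin_form_def)
  then show ?thesis
    by (rule that[of h]) (use assms 2 in \<open>auto simp: root_mult_ge_Suc_degree\<close>)
qed

lemma div_root:
  assumes "norm2 w" "bin_form (Suc N) g" "g \<noteq> (\<lambda>_. 0)" "root_mult_ge g (Suc N) w 1"
  obtains h where "bin_form N h" "h \<noteq> (\<lambda>_. 0)"
    "\<And>w' r. norm2 w' \<Longrightarrow> root_mult_ge g (Suc N) w' r \<Longrightarrow> root_mult_ge h N w' (if w' = w then r - 1 else r)"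
  using assms(1)
proof (cases rule: norm2E)
  case (1 t)
  then have "bin_taylor g (Suc N) t 0 = 0" using assms(4) by (simp add: root_mult_ge_fin)
  with assms(2) obtain h where h: "bin_form N h" "g = mul_linear t h" by (rule divide_linear)
  have "h \<noteq> (\<lambda>_. 0)" using assms(3) h(2) by auto
  with h show ?thesis
    by (intro that[of h]) (use 1 root_mult_ge_div_linear in auto)
next
  case 2
  then have "g (Suc N) = 0" using assms(4) by (simp add: root_mult_ge_inf)
  then have "bin_form N g" using assms(2) unfolding bin_form_def by (metis Suc_lessI)
  with assms(3) show ?thesis
    by (intro that[of g]) (use 2 root_mult_ge_pred_degree in auto)
qed

lemma bin_form_with_roots:
  assumes "\<forall>w\<in>#D. norm2 w"
  shows "\<exists>g. bin_form (size D) g \<and> g \<noteq> (\<lambda>_. 0) \<and> (\<forall>w. norm2 w \<longrightarrow> root_mult_ge g (size D) w (count D w))"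
  using assms
proof (induction D)
  case empty
  have "bin_form 0 (\<lambda>j. if j = 0 then 1 else 0)" by (simp add: bin_form_def)
  then show ?case by (auto simp: fun_eq_iff)
next
  case (add w D)
  then obtain g where g: "bin_form (size D) g" "g \<noteq> (\<lambda>_. 0)"
    "\<And>w'. norm2 w' \<Longrightarrow> root_mult_ge g (size D) w' (count D w')" by auto
  obtain g' where g': "bin_form (Suc (size D)) g'" "g' \<noteq> (\<lambda>_. 0)"
    "\<And>w' r. norm2 w' \<Longrightarrow> root_mult_ge g (size D) w' r
       \<Longrightarrow> root_mult_ge g' (Suc (size D)) w' (if w' = w then Suc r else r)"
    using mul_root[of w "size D" g] add.prems g(1,2) by auto
  have "bin_form (size (add_mset w D)) g'" using g'(1) by simp
  moreover have "root_mult_ge g' (size (add_mset w D)) w' (count (add_mset w D) w')" if "norm2 w'" for w'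
    using g'(3)[OF that g(3)[OF that]] by (cases "w' = w") simp_all
  ultimately show ?case using g'(2) by blast
qed

lemma divide_roots:
  assumes "\<forall>w\<in>#D. norm2 w" "bin_form (N + size D) g" "g \<noteq> (\<lambda>_. 0)"
    "\<forall>w\<in>#D. root_mult_ge g (N + size D) w (count D w)"
  shows "\<exists>h. bin_form N h \<and> h \<noteq> (\<lambda>_. 0) \<and>
           (\<forall>w r. norm2 w \<longrightarrow> root_mult_ge g (N + size D) w r \<longrightarrow> root_mult_ge h N w (r - count D w))"
  using assms
proof (induction D arbitrary: g)
  case empty
  then show ?case by auto
next
  case (add w D)
  have w: "norm2 w" using add.prems(1) by simp
  have "root_mult_ge g (Suc (N + size D)) w 1"
    using add.prems(4) by (auto intro: root_mult_ge_mono)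
  then obtain g1 where g1: "bin_form (N + size D) g1" "g1 \<noteq> (\<lambda>_. 0)"
    "\<And>w' r. norm2 w' \<Longrightarrow> root_mult_ge g (Suc (N + size D)) w' r
       \<Longrightarrow> root_mult_ge g1 (N + size D) w' (if w' = w then r - 1 else r)"
    using div_root[OF w, of "N + size D" g] add.prems(2,3) by auto
  have "\<forall>w'\<in>#D. root_mult_ge g1 (N + size D) w' (count D w')"
  proof
    fix w' assume "w' \<in># D"
    then have "norm2 w'" "root_mult_ge g (Suc (N + size D)) w' (count (add_mset w D) w')"
      using add.prems(1,4) by simp_all
    then have "root_mult_ge g1 (N + size D) w'
                 (if w' = w then count (add_mset w D) w' - 1 else count (add_mset w D) w')"
      by (rule g1(3))
    then show "root_mult_ge g1 (N + size D) w' (count D w')"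
      by (cases "w' = w") simp_all
  qed
  then obtain h where h: "bin_form N h" "h \<noteq> (\<lambda>_. 0)"
    "\<And>w' r. norm2 w' \<Longrightarrow> root_mult_ge g1 (N + size D) w' r \<Longrightarrow> root_mult_ge h N w' (r - count D w')"
    using add.IH[of g1] add.prems(1) g1(1,2) by auto
  have "root_mult_ge h N w' (r - count (add_mset w D) w')"
    if "norm2 w'" "root_mult_ge g (N + size (add_mset w D)) w' r" for w' r
  proof -
    have "root_mult_ge g (Suc (N + size D)) w' r" using that(2) by simp
    then have "root_mult_ge g1 (N + size D) w' (if w' = w then r - 1 else r)" by (rule g1(3)[OF that(1)])
    then have "root_mult_ge h N w' ((if w' = w then r - 1 else r) - count D w')" by (rule h(3)[OF that(1)])
    then show ?thesis by (cases "w' = w") simp_all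
  qed
  with h(1,2) show ?case by blast
qed

lemma bin_form_0_root:
  assumes "bin_form 0 h" "norm2 w" "root_mult_ge h 0 w 1"
  shows "h = (\<lambda>_. 0)"
proof -
  have "h 0 = 0" using assms(2)
    by (cases rule: norm2E) (use assms(3) in \<open>auto simp: root_mult_ge_fin root_mult_ge_inf bin_taylor_def\<close>)
  moreover have "h j = 0" if "0 < j" for j using assms(1) that by (simp add: bin_form_def)
  ultimately show ?thesis by (metis neq0_conv)
qed

lemma root_mult_le_degree:
  assumes "norm2 w" "bin_form N g" "g \<noteq> (\<lambda>_. 0)" "root_mult_ge g N w r"
  shows "r \<le> N"
proof (rule ccontr)
  assume "\<not> r \<le> N"
  let ?D = "replicate_mset N w"
  have D: "\<forall>w'\<in>#?D. norm2 w'" and deg: "bin_form (0 + size ?D) g" using assms(1,2) by simp_all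
  have "\<forall>w'\<in>#?D. root_mult_ge g (0 + size ?D) w' (count ?D w')"
    using assms(4) \<open>\<not> r \<le> N\<close> by (auto elim: root_mult_ge_mono)
  from divide_roots[OF D deg assms(3) this] obtain h where h: "bin_form 0 h" "h \<noteq> (\<lambda>_. 0)"
    "\<forall>w' r. norm2 w' \<longrightarrow> root_mult_ge g (0 + size ?D) w' r \<longrightarrow> root_mult_ge h 0 w' (r - count ?D w')"
    by blast
  have "root_mult_ge h 0 w (r - N)" using h(3)[rule_format, OF assms(1)] assms(4) by simp
  then have "root_mult_ge h 0 w 1" using \<open>\<not> r \<le> N\<close> by (auto elim: root_mult_ge_mono)
  with h(1,2) assms(1) show False using bin_form_0_root by blast
qed

definition bin_taylor_at :: "(nat \<Rightarrow> complex) \<Rightarrow> nat \<Rightarrow> complex \<Rightarrow> nat \<Rightarrow> nat \<Rightarrow> complex" where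
  "bin_taylor_at g N q a b = (\<Sum>j\<le>N. g j * of_nat ((N - j) choose a) * of_nat (j choose b) * q ^ (j - b))"

lemma bin_taylor_at_0: "bin_taylor_at g N q 0 b = bin_taylor g N q b"
  by (simp add: bin_taylor_at_def bin_taylor_def)

lemma bin_taylor_at_euler_term:
  assumes "j \<le> N"
  shows "of_nat (Suc a) * (x * of_nat ((N - j) choose Suc a) * of_nat (j choose b) * q ^ (j - b))
        + of_nat (Suc b) * q * (x * of_nat ((N - j) choose a) * of_nat (j choose Suc b) * q ^ (j - Suc b))
        = of_nat (N - a - b) * (x * of_nat ((N - j) choose a) * of_nat (j choose b) * (q::complex) ^ (j - b))"
proof -
  define W where "W = x * of_nat ((N - j) choose a) * of_nat (j choose b) * q ^ (j - b)"
  have "of_nat (Suc a) * (x * of_nat ((N - j) choose Suc a) * of_nat (j choose b) * q ^ (j - b))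
      = (of_nat (Suc a) * of_nat ((N - j) choose Suc a)) * (x * of_nat (j choose b) * q ^ (j - b))"
    by (simp only: mult_ac)
  also have "\<dots> = (of_nat (N - j - a) * of_nat ((N - j) choose a)) * (x * of_nat (j choose b) * q ^ (j - b))"
    by (simp only: of_nat_binomial_absorb_comp)
  finally have first: "of_nat (Suc a) * (x * of_nat ((N - j) choose Suc a) * of_nat (j choose b) * q ^ (j - b))
      = of_nat (N - j - a) * W"
    by (simp only: W_def mult_ac)
  have "of_nat (Suc b) * q * (x * of_nat ((N - j) choose a) * of_nat (j choose Suc b) * q ^ (j - Suc b))
      = (of_nat (Suc b) * of_nat (j choose Suc b) * (q * q ^ (j - Suc b))) * (x * of_nat ((N - j) choose a))"
    by (simp only: mult_ac)
  also have "\<dots> = (of_nat (j - b) * of_nat (j choose b) * q ^ (j - b)) * (x * of_nat ((N - j) choose a))"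
    by (simp only: of_nat_binomial_absorb_comp_power)
  finally have second: "of_nat (Suc b) * q * (x * of_nat ((N - j) choose a) * of_nat (j choose Suc b) * q ^ (j - Suc b))
      = of_nat (j - b) * W"
    by (simp only: W_def mult_ac)
  show ?thesis
  proof (cases "a \<le> N - j \<and> b \<le> j")
    case True
    then have "N - j - a + (j - b) = N - a - b" using assms by arith
    then have "(of_nat (N - j - a) + of_nat (j - b) :: complex) = of_nat (N - a - b)"
      by (metis of_nat_add)
    then show ?thesis unfolding first second W_def[symmetric] by (simp flip: distrib_right)
  next
    case False
    then have "W = 0" by (auto simp: W_def binomial_eq_0)
    then show ?thesis unfolding first second W_def[symmetric] by simp
  qed
qed

lemma bin_taylor_at_euler:
  "of_nat (Suc a) * bin_taylor_at g N q (Suc a) b + of_nat (Suc b) * q * bin_taylor_at g N q a (Suc b)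
   = of_nat (N - a - b) * bin_taylor_at g N q a b"
  unfolding bin_taylor_at_def sum_distrib_left sum.distrib[symmetric]
  by (intro sum.cong refl) (rule bin_taylor_at_euler_term, simp)

lemma bin_taylor_at_vanish:
  assumes "root_mult_ge g N (1, q) M" "a + b < M"
  shows "bin_taylor_at g N q a b = 0"
  using assms(2)
proof (induction a arbitrary: b)
  case 0
  then show ?case using assms(1) by (simp add: bin_taylor_at_0 root_mult_ge_fin)
next
  case (Suc a)
  then have "bin_taylor_at g N q a b = 0" "bin_taylor_at g N q a (Suc b) = 0" by auto
  then have "of_nat (Suc a) * bin_taylor_at g N q (Suc a) b = 0"
    using bin_taylor_at_euler[of a g N q b] by simp
  then show ?case by (simp del: of_nat_Suc)
qed

lemma root_mults_le_degree:
  assumes "norm2 w1" "norm2 w2" "w1 \<noteq> w2" "bin_form N g" "g \<noteq> (\<lambda>_. 0)"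
    and "root_mult_ge g N w1 r1" "root_mult_ge g N w2 r2"
  shows "r1 + r2 \<le> N"
proof -
  have "r1 \<le> N" using root_mult_le_degree assms(1,4-6) .
  let ?D = "replicate_mset r1 w1"
  have D: "\<forall>w\<in>#?D. norm2 w" and deg: "bin_form (N - r1 + size ?D) g"
    using assms(1,4) \<open>r1 \<le> N\<close> by simp_all
  have "\<forall>w\<in>#?D. root_mult_ge g (N - r1 + size ?D) w (count ?D w)"
    using assms(6) \<open>r1 \<le> N\<close> by simp
  from divide_roots[OF D deg assms(5) this] obtain h where h: "bin_form (N - r1) h" "h \<noteq> (\<lambda>_. 0)"
    "\<forall>w r. norm2 w \<longrightarrow> root_mult_ge g (N - r1 + size ?D) w r \<longrightarrow> root_mult_ge h (N - r1) w (r - count ?D w)"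
    by blast
  have "root_mult_ge h (N - r1) w2 r2"
    using h(3)[rule_format, OF assms(2)] assms(3,7) \<open>r1 \<le> N\<close> by simp
  then have "r2 \<le> N - r1" using root_mult_le_degree assms(2) h(1,2) by blast
  then show ?thesis using \<open>r1 \<le> N\<close> by simp
qed

section \<open>Sections given by binary forms\<close>

text \<open>A form in \<open>x, y\<close> alone defines a union of lines through \<open>P\<^sub>1\<close>; its multiplicities at
  points of \<open>S\<^sub>1\<close> are multiplicities of roots of the corresponding binary form, plus \<open>2 d\<close> on
  \<open>E\<^sub>1\<close> since the total transform contains \<open>3 d E\<^sub>1\<close>.\<close>

definition is_binary_form :: "nat \<Rightarrow> (nat \<Rightarrow> nat \<Rightarrow> complex) \<Rightarrow> bool" where
  "is_binary_form N c \<longleftrightarrow> (\<forall>i j. i + j \<noteq> N \<longrightarrow> c i j = 0)"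

definition graded_part :: "(nat \<Rightarrow> nat \<Rightarrow> complex) \<Rightarrow> nat \<Rightarrow> nat \<Rightarrow> complex" where
  "graded_part c n j = (if j \<le> n then c (n - j) j else 0)"

definition of_binary :: "nat \<Rightarrow> (nat \<Rightarrow> complex) \<Rightarrow> nat \<Rightarrow> nat \<Rightarrow> complex" where
  "of_binary N g i j = (if i + j = N then g j else 0)"

definition line_dir :: "complex \<times> complex \<times> complex \<Rightarrow> complex \<times> complex" where
  "line_dir p = (fst p, fst (snd p))"

definition point_dir :: "s1pt \<Rightarrow> complex \<times> complex" where
  "point_dir Q = (case Q of Off p \<Rightarrow> line_dir p | Exc l \<Rightarrow> l)"

lemma norm2_point_dir: "Q \<in> S1 \<Longrightarrow> norm2 (point_dir Q)"
  by (auto simp: S1_def point_dir_def line_dir_def norm3_def norm2_def P1_def)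

lemma bin_form_graded_part: "bin_form n (graded_part c n)"
  by (simp add: bin_form_def graded_part_def)

lemma graded_part_eq_0: "graded_part c n = (\<lambda>_. 0) \<Longrightarrow> i + j = n \<Longrightarrow> c i j = 0"
  by (metis add_diff_cancel_right' graded_part_def le_add2)

lemma graded_part_of_binary: "bin_form N g \<Longrightarrow> graded_part (of_binary N g) N = g"
  by (auto simp: fun_eq_iff graded_part_def of_binary_def bin_form_def)

lemma is_binary_form_of_binary: "is_binary_form N (of_binary N g)"
  by (simp add: is_binary_form_def of_binary_def)

lemma sect_of_binary:
  assumes "bin_form (3 * d) g" "g \<noteq> (\<lambda>_. 0)"
  shows "sect d (of_binary (3 * d) g)"
proof -
  obtain j where j: "g j \<noteq> 0" using assms(2) by auto
  then have "j \<le> 3 * d" using assms(1) by (auto simp: bin_form_def not_le[symmetric])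
  then have "of_binary (3 * d) g (3 * d - j) j \<noteq> 0" using j by (simp add: of_binary_def)
  moreover have "is_form (3 * d) (of_binary (3 * d) g)" "mult_P1_ge d (of_binary (3 * d) g)"
    by (auto simp: is_form_def mult_P1_ge_def of_binary_def)
  ultimately show ?thesis unfolding sect_iff by blast
qed

lemma taylorE_fin_graded: "taylorE k c (1, t) a b = bin_taylor (graded_part c (k + a)) (k + a) t b"
  unfolding taylorE_fin bin_taylor_def by (rule sum.cong) (auto simp: graded_part_def)

lemma taylorE_binary_fin:
  assumes "is_binary_form (3 * d) c"
  shows "taylorE d c (1, t) a b = (if a = 2 * d then bin_taylor (graded_part c (3 * d)) (3 * d) t b else 0)"
proof (cases "a = 2 * d")
  case True
  then show ?thesis by (simp add: taylorE_fin_graded)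
next
  case False
  then show ?thesis using assms by (auto simp: taylorE_fin is_binary_form_def intro!: sum.neutral)
qed

lemma taylorE_binary_inf:
  assumes "is_binary_form (3 * d) c"
  shows "taylorE d c (0, 1) a b = (if b = 2 * d \<and> a \<le> 3 * d then graded_part c (3 * d) (3 * d - a) else 0)"
  using assms by (auto simp: taylorE_inf graded_part_def is_binary_form_def)

lemma mult_ge_Exc_binary:
  assumes "is_binary_form (3 * d) c" "norm2 l"
  shows "mult_ge d c (Exc l) M \<longleftrightarrow> root_mult_ge (graded_part c (3 * d)) (3 * d) l (M - 2 * d)"
  using assms(2)
proof (cases rule: norm2E)
  case (1 t)
  have "(\<forall>a b. a + b < M \<longrightarrow> taylorE d c (1, t) a b = 0)
        \<longleftrightarrow> (\<forall>b. 2 * d + b < M \<longrightarrow> bin_taylor (graded_part c (3 * d)) (3 * d) t b = 0)"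
    unfolding taylorE_binary_fin[OF assms(1)] by auto
  then show ?thesis using 1 by (simp add: mult_ge_Exc root_mult_ge_fin less_diff_conv add.commute)
next
  case 2
  have "(\<forall>a b. a + b < M \<longrightarrow> taylorE d c (0, 1) a b = 0)
        \<longleftrightarrow> (\<forall>a. a + 2 * d < M \<longrightarrow> a \<le> 3 * d \<longrightarrow> graded_part c (3 * d) (3 * d - a) = 0)"
    unfolding taylorE_binary_inf[OF assms(1)] by auto
  then show ?thesis using 2 by (simp add: mult_ge_Exc root_mult_ge_inf less_diff_conv)
qed

lemma form_taylor_binary:
  assumes "is_binary_form N c"
  shows "form_taylor N c (p0, p1, p2) a b e = (if e = 0 then
     \<Sum>i\<le>N. c i (N - i) * of_nat (i choose a) * of_nat ((N - i) choose b) * p0 ^ (i - a) * p1 ^ (N - i - b)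
     else 0)"
proof -
  have "(\<Sum>j\<le>N - i. c i j * of_nat (i choose a) * of_nat (j choose b) * of_nat ((N - i - j) choose e)
        * p0 ^ (i - a) * p1 ^ (j - b) * p2 ^ (N - i - j - e))
      = (\<Sum>j\<le>N - i. if j = N - i then (if e = 0 then c i (N - i) * of_nat (i choose a)
          * of_nat ((N - i) choose b) * p0 ^ (i - a) * p1 ^ (N - i - b) else 0) else 0)" for i
    by (rule sum.cong) (use assms in \<open>auto simp: is_binary_form_def\<close>)
  then show ?thesis by (simp add: form_taylor_def sum.delta cong: if_cong)
qed

lemma form_taylor_binary_fin:
  assumes "is_binary_form N c"
  shows "form_taylor N c (1, q, p2) a b e = (if e = 0 then bin_taylor_at (graded_part c N) N q a b else 0)"
proof -
  have "(\<Sum>i\<le>N. c i (N - i) * of_nat (i choose a) * of_nat ((N - i) choose b) * q ^ (N - i - b))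
        = bin_taylor_at (graded_part c N) N q a b"
    unfolding bin_taylor_at_def graded_part_def
    by (rule sum.reindex_bij_witness[where i="\<lambda>j. N - j" and j="\<lambda>i. N - i"]) auto
  then show ?thesis by (simp add: form_taylor_binary[OF assms])
qed

lemma form_taylor_binary_inf:
  assumes "is_binary_form N c"
  shows "form_taylor N c (0, 1, p2) a b e
         = (if e = 0 \<and> a \<le> N then graded_part c N (N - a) * of_nat ((N - a) choose b) else 0)"
proof -
  have "(\<Sum>i\<le>N. c i (N - i) * of_nat (i choose a) * of_nat ((N - i) choose b) * 0 ^ (i - a) * 1 ^ (N - i - b))
        = (\<Sum>i\<le>N. if i = a then c a (N - a) * of_nat ((N - a) choose b) else (0::complex))"
    by (rule sum.cong) auto
  then show ?thesis by (auto simp: form_taylor_binary[OF assms] graded_part_def sum.delta)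
qed

lemma form_mult_ge_binary:
  assumes "is_binary_form N c" "norm2 (p0, p1)"
  shows "form_mult_ge N c (p0, p1, p2) M \<longleftrightarrow> root_mult_ge (graded_part c N) N (p0, p1) M"
  using assms(2)
proof (cases rule: norm2E)
  case (1 q)
  then have p: "p0 = 1" "p1 = q" by simp_all
  have "form_mult_ge N c (1, q, p2) M \<longleftrightarrow> (\<forall>a b. a + b < M \<longrightarrow> bin_taylor_at (graded_part c N) N q a b = 0)"
    unfolding form_mult_ge_def form_taylor_binary_fin[OF assms(1)] by (metis add_0_right)
  also have "\<dots> \<longleftrightarrow> root_mult_ge (graded_part c N) N (1, q) M"
    using bin_taylor_at_vanish by (auto simp: root_mult_ge_fin bin_taylor_at_0[symmetric])
  finally show ?thesis unfolding p .
next
  case 2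
  then have p: "p0 = 0" "p1 = 1" by simp_all
  have "form_mult_ge N c (0, 1, p2) M \<longleftrightarrow> (\<forall>a<M. a \<le> N \<longrightarrow> graded_part c N (N - a) = 0)"
    unfolding form_mult_ge_def form_taylor_binary_inf[OF assms(1)]
    by (metis (no_types, lifting) add.right_neutral binomial_n_0 mult.right_neutral of_nat_1
        add_lessD1 mult_zero_left)
  then show ?thesis unfolding p by (simp add: root_mult_ge_inf)
qed

lemma mult_ge_binary:
  assumes "is_binary_form (3 * d) c" "Q \<in> S1"
  shows "mult_ge d c Q M \<longleftrightarrow>
         root_mult_ge (graded_part c (3 * d)) (3 * d) (point_dir Q) (if Q \<in> E1 then M - 2 * d else M)"
  using assms(2)
proof (cases rule: S1_cases)
  case (1 p)
  obtain p0 p1 p2 where p: "p = (p0, p1, p2)" by (cases p)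
  have "norm2 (p0, p1)" using norm2_point_dir[OF assms(2)] 1 p by (simp add: point_dir_def line_dir_def)
  then show ?thesis
    using 1 p form_mult_ge_binary[OF assms(1)] by (simp add: mult_ge_Off point_dir_def line_dir_def)
next
  case (2 l)
  then show ?thesis using mult_ge_Exc_binary[OF assms(1)] by (simp add: point_dir_def)
qed

lemma has_section_of_bin_form:
  assumes "bin_form (3 * d) g" "g \<noteq> (\<lambda>_. 0)" "Z \<subseteq> S1"
    and "\<forall>Q\<in>Z. root_mult_ge g (3 * d) (point_dir Q) (if Q \<in> E1 then M - 2 * d else M)"
  shows "has_section M Z d"
  unfolding has_section_def
proof (intro exI conjI ballI)
  show "sect d (of_binary (3 * d) g)" by (rule sect_of_binary[OF assms(1,2)])
  fix Q assume "Q \<in> Z"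
  then show "mult_ge d (of_binary (3 * d) g) Q M"
    using mult_ge_binary[OF is_binary_form_of_binary, of Q] graded_part_of_binary[OF assms(1)] assms(3,4)
    by auto
qed

lemma is_binary_form_xy_deriv: "is_xy_deriv D \<Longrightarrow> is_binary_form (Suc N) c \<Longrightarrow> is_binary_form N (D c)"
  by (auto simp: is_xy_deriv_def is_binary_form_def deriv_x_def deriv_y_def)

text \<open>When \<open>m \<le> 2 d\<close>, the condition at points of \<open>E\<^sub>1\<close> is empty for a binary form of degree \<open>3 d\<close>.\<close>

lemma descends_DDD:
  assumes "is_form (3 * d + 3) c" "is_binary_form (3 * d + 3) c" "m \<le> 2 * d"
    and "is_xy_deriv D1" "is_xy_deriv D2" "is_xy_deriv D3"
  shows "descends d c m (D3 (D2 (D1 c)))"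
proof -
  let ?c1 = "D1 c" let ?c2 = "D2 ?c1" let ?c3 = "D3 ?c2"
  have f1: "is_form (3 * d + 2) ?c1" using is_form_xy_deriv[OF assms(4,1)] by simp
  have f2: "is_form (3 * d + 1) ?c2" using is_form_xy_deriv[OF assms(5) f1] by simp
  have "Suc (3 * d + 2) = 3 * d + 3" by simp
  then have "is_binary_form (3 * d + 2) ?c1" using is_binary_form_xy_deriv[OF assms(4)] assms(2) by metis
  then have "is_binary_form (3 * d + 1) ?c2" using is_binary_form_xy_deriv[OF assms(5), of "3 * d + 1"] by simp
  then have b3: "is_binary_form (3 * d) ?c3" using is_binary_form_xy_deriv[OF assms(6), of "3 * d"] by simp
  show ?thesis
  proof (rule descendsI)
    show "is_form (3 * d) ?c3" using is_form_xy_deriv[OF assms(6) f2] by simp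
    show "mult_P1_ge d ?c3" using b3 by (auto simp: is_binary_form_def mult_P1_ge_def)
  next
    fix p assume "form_mult_ge (3 * d + 3) c p (m + 3)"
    then have "form_mult_ge (3 * d + 2) ?c1 p (m + 2)" using form_mult_ge_xy_deriv[OF assms(4,1)] by fastforce
    then have "form_mult_ge (3 * d + 1) ?c2 p (m + 1)" using form_mult_ge_xy_deriv[OF assms(5) f1] by fastforce
    then show "form_mult_ge (3 * d) ?c3 p m" using form_mult_ge_xy_deriv[OF assms(6) f2] by fastforce
  next
    fix l assume "norm2 l"
    then show "mult_ge d ?c3 (Exc l) m" using mult_ge_Exc_binary[OF b3] assms(3) by simp
  qed
qed

definition exceptional :: "s1pt set \<Rightarrow> bool" where
  "exceptional Z \<longleftrightarrow> (\<exists>Q. Q \<in> E1 \<and> Z = {Q}) \<or> (\<exists>Q1 Q2. Q1 \<in> E1 \<and> Q2 \<in> E1 \<and> Q1 \<noteq> Q2 \<and> Z = {Q1, Q2})"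

lemma not_exceptional_E1_points:
  assumes "Z \<subseteq> S1" "Z \<noteq> {}" "\<not> exceptional Z" "\<forall>p. Off p \<notin> Z"
  obtains l1 l2 l3 where "Exc l1 \<in> Z" "Exc l2 \<in> Z" "Exc l3 \<in> Z" "l1 \<noteq> l2" "l1 \<noteq> l3" "l2 \<noteq> l3"
proof -
  have in_E1: "Q \<in> E1" if "Q \<in> Z" for Q
    using assms(1,4) that by (cases Q) (auto simp: S1_def)
  obtain Q1 where Q1: "Q1 \<in> Z" using assms(2) by auto
  then obtain Q2 where Q2: "Q2 \<in> Z" "Q2 \<noteq> Q1"
    using assms(3) in_E1 unfolding exceptional_def by blast
  then obtain Q3 where Q3: "Q3 \<in> Z" "Q3 \<noteq> Q1" "Q3 \<noteq> Q2"
    using Q1 assms(3) in_E1 unfolding exceptional_def by blast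
  from Q1 Q2 Q3 in_E1 show ?thesis
    using that unfolding E1_def by blast
qed

lemma has_section_descent_off_point:
  assumes "bin_form (3 * d + 3) g" "g \<noteq> (\<lambda>_. 0)" "Z \<subseteq> S1" "Off p \<in> Z" "2 * d < m"
    and roots: "\<forall>Q\<in>Z. root_mult_ge g (3 * d + 3) (point_dir Q) (if Q \<in> E1 then m + 1 - 2 * d else m + 3)"
  shows "has_section m Z d"
proof -
  let ?w = "point_dir (Off p)"
  let ?D = "replicate_mset 3 ?w"
  have w: "norm2 ?w" using norm2_point_dir assms(3,4) by blast
  have gw: "root_mult_ge g (3 * d + 3) ?w (m + 3)" using roots assms(4) by (auto simp: E1_def)
  have "\<forall>w'\<in>#?D. norm2 w'" "bin_form (3 * d + size ?D) g"
    "\<forall>w'\<in>#?D. root_mult_ge g (3 * d + size ?D) w' (count ?D w')"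
    using w assms(1) gw by (auto elim: root_mult_ge_mono)
  from divide_roots[OF this(1,2) assms(2) this(3)] obtain h where h: "bin_form (3 * d) h" "h \<noteq> (\<lambda>_. 0)"
    "\<And>w' r. norm2 w' \<Longrightarrow> root_mult_ge g (3 * d + 3) w' r \<Longrightarrow> root_mult_ge h (3 * d) w' (r - count ?D w')"
    by auto
  show ?thesis
  proof (rule has_section_of_bin_form[OF h(1,2) assms(3)], intro ballI)
    fix Q assume Q: "Q \<in> Z"
    have "norm2 (point_dir Q)" using norm2_point_dir assms(3) Q by blast
    show "root_mult_ge h (3 * d) (point_dir Q) (if Q \<in> E1 then m - 2 * d else m)"
    proof (cases "point_dir Q = ?w")
      case True
      then have "root_mult_ge h (3 * d) (point_dir Q) (m + 3 - 3)"
        using h(3)[OF w gw] by simp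
      then show ?thesis by (rule root_mult_ge_mono) simp
    next
      case False
      then have "root_mult_ge h (3 * d) (point_dir Q) (if Q \<in> E1 then m + 1 - 2 * d else m + 3)"
        using h(3)[OF \<open>norm2 (point_dir Q)\<close>] roots Q by simp
      then show ?thesis by (rule root_mult_ge_mono) (simp add: diff_le_mono)
    qed
  qed
qed

lemma has_section_descent_three_E1:
  assumes "bin_form (3 * d + 3) g" "g \<noteq> (\<lambda>_. 0)" "Z \<subseteq> S1" "2 * d < m"
    and "Exc l1 \<in> Z" "Exc l2 \<in> Z" "Exc l3 \<in> Z" "l1 \<noteq> l2" "l1 \<noteq> l3" "l2 \<noteq> l3"
    and roots: "\<forall>Q\<in>Z. root_mult_ge g (3 * d + 3) (point_dir Q) (if Q \<in> E1 then m + 1 - 2 * d else m + 3)"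
    and no_off: "\<forall>p. Off p \<notin> Z"
  shows "has_section m Z d"
proof -
  let ?D = "{#l1, l2, l3#}"
  have in_E1: "Q \<in> E1" if "Q \<in> Z" for Q
    using no_off that assms(3) by (cases Q) (auto simp: S1_def E1_def)
  have dirs: "norm2 l1" "norm2 l2" "norm2 l3"
    using norm2_point_dir assms(3,5-7) by (force simp: point_dir_def)+
  have exc_roots: "root_mult_ge g (3 * d + 3) l (m + 1 - 2 * d)" if "Exc l \<in> Z" for l
    using roots that in_E1[OF that] by (force simp: point_dir_def)
  have size: "3 * d + size ?D = 3 * d + 3" by simp
  have "\<forall>w\<in>#?D. norm2 w" "bin_form (3 * d + size ?D) g"
    "\<forall>w\<in>#?D. root_mult_ge g (3 * d + size ?D) w (count ?D w)"
    unfolding size using dirs assms(1,4,8-10) exc_roots[OF assms(5)] exc_roots[OF assms(6)] exc_roots[OF assms(7)]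
    by (auto elim!: root_mult_ge_mono)
  from divide_roots[OF this(1,2) assms(2) this(3)] obtain h where h: "bin_form (3 * d) h" "h \<noteq> (\<lambda>_. 0)"
    "\<And>w r. norm2 w \<Longrightarrow> root_mult_ge g (3 * d + 3) w r \<Longrightarrow> root_mult_ge h (3 * d) w (r - count ?D w)"
    unfolding size by blast
  show ?thesis
  proof (rule has_section_of_bin_form[OF h(1,2) assms(3)], intro ballI)
    fix Q assume Q: "Q \<in> Z"
    then obtain l where l: "Q = Exc l" using no_off by (cases Q) auto
    have "norm2 l" using norm2_point_dir assms(3) Q l by (force simp: point_dir_def)
    have "root_mult_ge h (3 * d) l (m + 1 - 2 * d - count ?D l)"
      using h(3)[OF \<open>norm2 l\<close> exc_roots] Q l by simp
    moreover have "count ?D l \<le> 1" using assms(8-10) by auto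
    then have "m - 2 * d \<le> m + 1 - 2 * d - count ?D l" by linarith
    ultimately have "root_mult_ge h (3 * d) l (m - 2 * d)" by (rule root_mult_ge_mono)
    then show "root_mult_ge h (3 * d) (point_dir Q) (if Q \<in> E1 then m - 2 * d else m)"
      using l \<open>norm2 l\<close> by (simp add: point_dir_def)
  qed
qed

lemma has_section_descent_binary_small:
  assumes "sect (Suc d) c" "is_binary_form (3 * d + 3) c" "\<forall>Q\<in>Z. mult_ge (Suc d) c Q (m + 3)"
    and "Z \<subseteq> S1" "m \<le> 2 * d"
  shows "has_section m Z d"
proof -
  have F: "is_form (3 * d + 3) c" using assms(1) by (auto simp: sect_iff add.commute)
  obtain i j where ij: "c i j \<noteq> 0" using assms(1) by (auto simp: sect_def)
  then have "i + j = 3 * d + 3" using assms(2) by (auto simp: is_binary_form_def)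
  then have "2 \<le> i + j" by simp
  then obtain D1 D2 i2 j2 where D12: "is_xy_deriv D1" "is_xy_deriv D2" "D2 (D1 c) i2 j2 \<noteq> 0"
      "i2 + j2 + 2 = i + j"
    using exists_xy_derivs2_nonzero[of c i j] ij by blast
  moreover have "0 < i2 + j2" using D12(4) \<open>i + j = 3 * d + 3\<close> by simp
  ultimately obtain D3 i3 j3 where D3: "is_xy_deriv D3" "D3 (D2 (D1 c)) i3 j3 \<noteq> 0"
    using exists_xy_deriv_nonzero[of "D2 (D1 c)" i2 j2] by blast
  show ?thesis
    using has_section_if_descends[OF descends_DDD[OF F assms(2,5) D12(1,2) D3(1)] D3(2) assms(4,3)] .
qed

lemma has_section_descent_binary:
  assumes "sect (Suc d) c" "is_binary_form (3 * d + 3) c" "\<forall>Q\<in>Z. mult_ge (Suc d) c Q (m + 3)"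
    and "Z \<subseteq> S1" "Z \<noteq> {}" "\<not> exceptional Z" "2 * d < m"
  shows "has_section m Z d"
proof -
  obtain i j where ij: "c i j \<noteq> 0" using assms(1) by (auto simp: sect_def)
  then have "i + j = 3 * d + 3" using assms(2) by (auto simp: is_binary_form_def)
  define g where "g = graded_part c (3 * d + 3)"
  have bin: "is_binary_form (3 * Suc d) c" using assms(2) by (simp add: add.commute)
  have "3 * d + 3 - j = i" "j \<le> 3 * d + 3" using \<open>i + j = 3 * d + 3\<close> by simp_all
  then have "g j \<noteq> 0" using ij by (simp add: g_def graded_part_def)
  then have g: "bin_form (3 * d + 3) g" "g \<noteq> (\<lambda>_. 0)"
    using bin_form_graded_part by (auto simp: g_def)
  have roots: "\<forall>Q\<in>Z. root_mult_ge g (3 * d + 3) (point_dir Q) (if Q \<in> E1 then m + 1 - 2 * d else m + 3)"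
  proof
    fix Q assume "Q \<in> Z"
    then have "Q \<in> S1" "mult_ge (Suc d) c Q (m + 3)" using assms(3,4) by auto
    then have "root_mult_ge (graded_part c (3 * Suc d)) (3 * Suc d) (point_dir Q)
                 (if Q \<in> E1 then m + 3 - 2 * Suc d else m + 3)"
      using mult_ge_binary[OF bin] by blast
    moreover have "3 * Suc d = 3 * d + 3" "m + 3 - 2 * Suc d = m + 1 - 2 * d" by simp_all
    ultimately show "root_mult_ge g (3 * d + 3) (point_dir Q) (if Q \<in> E1 then m + 1 - 2 * d else m + 3)"
      by (simp only: g_def)
  qed
  show ?thesis
  proof (cases "\<exists>p. Off p \<in> Z")
    case True
    then obtain p where "Off p \<in> Z" by blast
    from has_section_descent_off_point[OF g assms(4) this assms(7) roots] show ?thesis .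
  next
    case no_off: False
    obtain l1 l2 l3 where "Exc l1 \<in> Z" "Exc l2 \<in> Z" "Exc l3 \<in> Z" "l1 \<noteq> l2" "l1 \<noteq> l3" "l2 \<noteq> l3"
      using not_exceptional_E1_points assms(4-6) no_off by blast
    from has_section_descent_three_E1[OF g assms(4,7) this roots] no_off show ?thesis by simp
  qed
qed

lemma has_section_descent:
  assumes "has_section (m + 3) Z (Suc d)" "Z \<subseteq> S1" "Z \<noteq> {}" "\<not> exceptional Z"
  shows "has_section m Z d"
proof -
  obtain c where c: "sect (Suc d) c" "\<forall>Q\<in>Z. mult_ge (Suc d) c Q (m + 3)"
    using assms(1) by (auto simp: has_section_def)
  show ?thesis
  proof (cases "is_binary_form (3 * d + 3) c")
    case binary: True
    show ?thesis
    proof (cases "m \<le> 2 * d")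
      case True
      then show ?thesis by (rule has_section_descent_binary_small[OF c(1) binary c(2) assms(2)])
    next
      case False
      then show ?thesis using has_section_descent_binary[OF c(1) binary c(2) assms(2-4)] by simp
    qed
  next
    case False
    then obtain i j where ij: "i + j \<noteq> 3 * d + 3" "c i j \<noteq> 0" by (auto simp: is_binary_form_def)
    moreover have "i + j \<le> 3 * d + 3" using c(1) ij(2) by (auto simp: sect_def not_less[symmetric])
    ultimately show ?thesis using has_section_descent_nonbinary[OF c assms(2)] by simp
  qed
qed

section \<open>Initial degrees\<close>

lemma has_section_exists:
  assumes "finite Z" "Z \<subseteq> S1"
  shows "\<exists>d. has_section M Z d"
proof -
  let ?W = "point_dir ` Z"
  let ?D = "repeat_mset (3 * M) (mset_set ?W)"
  have fin: "finite ?W" using assms(1) by simp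
  have "\<forall>w\<in>#?D. norm2 w"
  proof
    fix w assume "w \<in># ?D"
    then have "w \<in> ?W" using fin by (metis count_eq_zero_iff count_mset_set(3) count_repeat_mset mult_0_right)
    then show "norm2 w" using norm2_point_dir assms(2) by blast
  qed
  then obtain g where g: "bin_form (size ?D) g" "g \<noteq> (\<lambda>_. 0)"
    "\<forall>w. norm2 w \<longrightarrow> root_mult_ge g (size ?D) w (count ?D w)"
    using bin_form_with_roots by blast
  have size: "size ?D = 3 * (M * card ?W)" by simp
  have deg: "bin_form (3 * (M * card ?W)) g" using g(1) by (simp only: size)
  have "has_section M Z (M * card ?W)"
  proof (rule has_section_of_bin_form[OF deg g(2) assms(2)], intro ballI)
    fix Q assume "Q \<in> Z"
    then have Q: "norm2 (point_dir Q)" "point_dir Q \<in> ?W" using norm2_point_dir assms(2) by auto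
    then have "root_mult_ge g (size ?D) (point_dir Q) (count ?D (point_dir Q))" using g(3) by blast
    then have "root_mult_ge g (3 * (M * card ?W)) (point_dir Q) (3 * M)"
      by (simp only: size count_repeat_mset count_mset_set(1)[OF fin Q(2)] mult_1_right)
    then show "root_mult_ge g (3 * (M * card ?W)) (point_dir Q) (if Q \<in> E1 then M - 2 * (M * card ?W) else M)"
      by (rule root_mult_ge_mono) auto
  qed
  then show ?thesis by blast
qed

lemma no_section_deg0:
  assumes "Z \<noteq> {}" "Z \<subseteq> S1" "0 < M"
  shows "\<not> has_section M Z 0"
proof
  assume "has_section M Z 0"
  then obtain c where c: "sect 0 c" "\<forall>Q\<in>Z. mult_ge 0 c Q M" by (auto simp: has_section_def)
  obtain Q where Q: "Q \<in> Z" using assms(1) by auto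
  have bin: "is_binary_form (3 * 0) c" using c(1) by (auto simp: sect_def is_binary_form_def)
  have "Q \<in> S1" "mult_ge 0 c Q M" using Q c(2) assms(2) by auto
  then have "root_mult_ge (graded_part c (3 * 0)) (3 * 0) (point_dir Q) (if Q \<in> E1 then M - 2 * 0 else M)"
    using mult_ge_binary[OF bin] by blast
  then have "root_mult_ge (graded_part c 0) 0 (point_dir Q) M" by (cases "Q \<in> E1") simp_all
  then have "graded_part c 0 = (\<lambda>_. 0)"
    using bin_form_0_root bin_form_graded_part norm2_point_dir assms Q
    by (metis One_nat_def Suc_leI root_mult_ge_mono subsetD)
  then have "c 0 0 = 0" using graded_part_eq_0 by simp
  then have "c i j = 0" for i j using c(1) by (cases "i + j = 0") (auto simp: sect_def)
  then show False using c(1) by (auto simp: sect_def)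
qed

lemma alpha_less_alpha_add_3:
  assumes "finite Z" "Z \<subseteq> S1" "Z \<noteq> {}" "\<not> exceptional Z"
  shows "alpha m Z < alpha (m + 3) Z"
proof -
  define d where "d = alpha (m + 3) Z"
  have sec: "has_section (m + 3) Z d"
    unfolding d_def alpha_has_section using has_section_exists[OF assms(1,2)] by (rule LeastI_ex)
  have "d \<noteq> 0"
  proof
    assume "d = 0"
    with sec no_section_deg0[OF assms(3,2)] show False by simp
  qed
  then obtain d' where d': "d = Suc d'" using not0_implies_Suc by blast
  then have "has_section m Z d'" using has_section_descent[OF _ assms(2-4)] sec by simp
  then have "alpha m Z \<le> d'" unfolding alpha_has_section by (rule Least_le)
  then show ?thesis using d' d_def by simp
qed

lemma alpha_eqI:
  assumes "has_section M Z d" "\<And>d'. d' < d \<Longrightarrow> \<not> has_section M Z d'"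
  shows "alpha M Z = d"
  unfolding alpha_has_section using assms by (intro Least_equality) (auto simp: not_less[symmetric])

lemma root_mult_ge_graded_part:
  assumes "norm2 l" "mult_ge k c (Exc l) M" "k \<le> n"
  shows "root_mult_ge (graded_part c n) n l (M - (n - k))"
  using assms(1)
proof (cases rule: norm2E)
  case (1 t)
  have "bin_taylor (graded_part c n) n t b = 0" if "b < M - (n - k)" for b
  proof -
    have "taylorE k c (1, t) (n - k) b = 0" using assms(2) that 1 by (simp add: mult_ge_Exc)
    then show ?thesis using taylorE_fin_graded[of k c t "n - k" b] assms(3) by simp
  qed
  then show ?thesis using 1 by (simp add: root_mult_ge_fin)
next
  case 2
  have "graded_part c n (n - a) = 0" if "a < M - (n - k)" "a \<le> n" for a
  proof -
    have "taylorE k c (0, 1) a (n - k) = 0" using assms(2) that 2 by (simp add: mult_ge_Exc)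
    then show ?thesis using assms(3) that by (simp add: taylorE_inf graded_part_def)
  qed
  then show ?thesis using 2 by (simp add: root_mult_ge_inf)
qed

lemma no_section_deg1_two_E1_points:
  assumes "norm2 l1" "norm2 l2" "l1 \<noteq> l2"
    and "sect 1 c" "mult_ge 1 c (Exc l1) 4" "mult_ge 1 c (Exc l2) 4"
  shows False
proof -
  have "graded_part c n = (\<lambda>_. 0)" if "n \<in> {1, 2}" for n
  proof (rule ccontr)
    assume "graded_part c n \<noteq> (\<lambda>_. 0)"
    moreover have "root_mult_ge (graded_part c n) n l1 (5 - n)"
      using root_mult_ge_graded_part[OF assms(1,5), of n] that by auto
    ultimately have "5 - n \<le> n" using root_mult_le_degree[OF assms(1) bin_form_graded_part] by blast
    then show False using that by auto
  qed
  moreover have "graded_part c 3 = (\<lambda>_. 0)"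
  proof (rule ccontr)
    assume "graded_part c 3 \<noteq> (\<lambda>_. 0)"
    moreover have "root_mult_ge (graded_part c 3) 3 l1 2" "root_mult_ge (graded_part c 3) 3 l2 2"
      using root_mult_ge_graded_part[OF assms(1,5), of 3] root_mult_ge_graded_part[OF assms(2,6), of 3]
      by simp_all
    ultimately have "2 + 2 \<le> (3::nat)" using root_mults_le_degree[OF assms(1-3) bin_form_graded_part] by blast
    then show False by simp
  qed
  ultimately have graded: "graded_part c n = (\<lambda>_. 0)" if "1 \<le> n" "n \<le> 3" for n
    using that by (metis insert_iff le_antisym not_less_eq_eq numeral_2_eq_2 numeral_3_eq_3 One_nat_def)
  have "c i j = 0" for i j
  proof (cases "1 \<le> i + j \<and> i + j \<le> 3")
    case True
    then show ?thesis using graded graded_part_eq_0 by blast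
  next
    case False
    then have "i + j < 1 \<or> 3 < i + j" by linarith
    then show ?thesis using assms(4) by (auto simp: sect_def)
  qed
  then show False using assms(4) by (auto simp: sect_def)
qed

lemma alpha_single_E1:
  assumes "norm2 l" "1 \<le> k" "k \<le> 5"
  shows "alpha k {Exc l} = 1"
proof (rule alpha_eqI)
  let ?D = "replicate_mset 3 l"
  obtain g where g: "bin_form (size ?D) g" "g \<noteq> (\<lambda>_. 0)"
    "\<forall>w. norm2 w \<longrightarrow> root_mult_ge g (size ?D) w (count ?D w)"
    using bin_form_with_roots[of ?D] assms(1) by auto
  have deg: "bin_form (3 * 1) g" using g(1) by simp
  have "root_mult_ge g (3 * 1) l 3" using g(3)[rule_format, OF assms(1)] by simp
  then have "root_mult_ge g (3 * 1) (point_dir (Exc l)) (if Exc l \<in> E1 then k - 2 * 1 else k)"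
    using assms by (auto simp: point_dir_def elim: root_mult_ge_mono)
  then show "has_section k {Exc l} 1"
    using has_section_of_bin_form[OF deg g(2)] assms(1) by simp
next
  fix d' :: nat assume "d' < 1"
  then show "\<not> has_section k {Exc l} d'" using no_section_deg0 assms by simp
qed

lemma alpha_pair_E1:
  assumes "norm2 l1" "norm2 l2" "l1 \<noteq> l2" "4 \<le> k" "k \<le> 7"
  shows "alpha k {Exc l1, Exc l2} = 2"
proof (rule alpha_eqI)
  let ?D = "replicate_mset 3 l1 + replicate_mset 3 l2"
  obtain g where g: "bin_form (size ?D) g" "g \<noteq> (\<lambda>_. 0)"
    "\<forall>w. norm2 w \<longrightarrow> root_mult_ge g (size ?D) w (count ?D w)"
    using bin_form_with_roots[of ?D] assms(1,2) by auto
  have deg: "bin_form (3 * 2) g" using g(1) by simp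
  have "root_mult_ge g (3 * 2) l1 3" "root_mult_ge g (3 * 2) l2 3"
    using g(3)[rule_format, OF assms(1)] g(3)[rule_format, OF assms(2)] assms(3) by simp_all
  then have "\<forall>Q\<in>{Exc l1, Exc l2}. root_mult_ge g (3 * 2) (point_dir Q) (if Q \<in> E1 then k - 2 * 2 else k)"
    using assms by (auto simp: point_dir_def elim: root_mult_ge_mono)
  then show "has_section k {Exc l1, Exc l2} 2"
    using has_section_of_bin_form[OF deg g(2)] assms(1,2) by simp
next
  fix d' :: nat assume "d' < 2"
  then consider "d' = 0" | "d' = 1" by linarith
  then show "\<not> has_section k {Exc l1, Exc l2} d'"
  proof cases
    case 1
    then show ?thesis using no_section_deg0 assms by simp
  next
    case 2
    show ?thesis
    proof
      assume "has_section k {Exc l1, Exc l2} d'"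
      then obtain c where "sect 1 c" "mult_ge 1 c (Exc l1) k" "mult_ge 1 c (Exc l2) k"
        using 2 by (auto simp: has_section_def)
      then show False
        using no_section_deg1_two_E1_points[OF assms(1-3)] mult_ge_mono assms(4) by blast
    qed
  qed
qed

theorem theorem2:
  assumes "Z \<subseteq> S1" and "finite Z" and "Z \<noteq> {}"
  shows "(\<exists>m::nat. m > 0 \<and> alpha m Z = alpha (m + 1) Z \<and> alpha (m + 1) Z = alpha (m + 2) Z
            \<and> alpha (m + 2) Z = alpha (m + 3) Z)
         \<longleftrightarrow> ((\<exists>Q. Q \<in> E1 \<and> Z = {Q})
              \<or> (\<exists>Q1 Q2. Q1 \<in> E1 \<and> Q2 \<in> E1 \<and> Q1 \<noteq> Q2 \<and> Z = {Q1, Q2}))"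
  unfolding exceptional_def[symmetric]
proof
  assume "\<exists>m. m > 0 \<and> alpha m Z = alpha (m + 1) Z \<and> alpha (m + 1) Z = alpha (m + 2) Z
            \<and> alpha (m + 2) Z = alpha (m + 3) Z"
  then obtain m where "alpha m Z = alpha (m + 3) Z" by auto
  then show "exceptional Z" using alpha_less_alpha_add_3[OF assms(2,1,3)] by (metis less_irrefl)
next
  assume "exceptional Z"
  then consider (single) l where "norm2 l" "Z = {Exc l}"
    | (pair) l1 l2 where "norm2 l1" "norm2 l2" "l1 \<noteq> l2" "Z = {Exc l1, Exc l2}"
    unfolding exceptional_def E1_def by blast
  then show "\<exists>m. m > 0 \<and> alpha m Z = alpha (m + 1) Z \<and> alpha (m + 1) Z = alpha (m + 2) Z
            \<and> alpha (m + 2) Z = alpha (m + 3) Z"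
  proof cases
    case single
    then show ?thesis by (intro exI[of _ 1]) (simp add: alpha_single_E1)
  next
    case pair
    then show ?thesis by (intro exI[of _ 4]) (simp add: alpha_pair_E1)
  qed
qed

end
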